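(* There exists an algorithm that takes as input a scalar Generalized Path Problem instance $(G,W,L,x_0)$, where $G$ is a directed acyclic graph with $n$ vertices (including two special vertices $s,t$) and each edge $e$ of $G$ has weight function $w_e(x)=a_e x+b_e$ with $a_e,b_e\in\mathbb{R}$, and outputs an optimal $s$-$t$ path in $G$, in $O(n^3)$ running time.
   Context: A Generalized Path Problem (GPP) instance is a tuple $(G,W,L,\mathbf{x}_0)$ where $G=(V\cup\{s,t\},E)$ is a directed acyclic graph with special vertices $s,t$, $W=\{w_e:\mathbb{R}^k\to\mathbb{R}^k : e\in E\}$ is a set of edge weight functions, $L\in\mathbb{R}^k$, and $\mathbf{x}_0\in\mathbb{R}^k$ is the initial parameter. The goal is to output an $s$-$t$ path $P=(e_1,\dots,e_r)$ maximizing $L\cdot w_{e_r}(w_{e_{r-1}}(\cdots w_{e_1}(\mathbf{x}_0)\cdots))$; such a path is called optimal. The instance is called scalar when $k=1$. *)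

theory Defs
  imports Complex_Main
begin

type_synonym mem = "nat \<Rightarrow> real"

datatype aexp = N int | Rd aexp | Add aexp aexp | Sub aexp aexp | Mul aexp aexp | Dv aexp aexp

datatype bexp = Bc bool | BNot bexp | BAnd bexp bexp | Less aexp aexp

datatype com =
    SKIP
  | Assign aexp aexp     (* Assign addr e : memory cell at address addr gets value of e *)
  | Seq com com
  | If bexp com com
  | While bexp com

fun aval :: "aexp \<Rightarrow> mem \<Rightarrow> real option" where
  "aval (N i) m = Some (of_int i)"
| "aval (Rd a) m = (case aval a m of None \<Rightarrow> None
     | Some x \<Rightarrow> if x \<in> \<nat> then Some (m (nat \<lfloor>x\<rfloor>)) else None)"
| "aval (Add a1 a2) m = (case (aval a1 m, aval a2 m) of (Some x, Some y) \<Rightarrow> Some (x + y) | _ \<Rightarrow> None)"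
| "aval (Sub a1 a2) m = (case (aval a1 m, aval a2 m) of (Some x, Some y) \<Rightarrow> Some (x - y) | _ \<Rightarrow> None)"
| "aval (Mul a1 a2) m = (case (aval a1 m, aval a2 m) of (Some x, Some y) \<Rightarrow> Some (x * y) | _ \<Rightarrow> None)"
| "aval (Dv a1 a2) m = (case (aval a1 m, aval a2 m) of
     (Some x, Some y) \<Rightarrow> if y = 0 then None else Some (x / y) | _ \<Rightarrow> None)"

fun bval :: "bexp \<Rightarrow> mem \<Rightarrow> bool option" where
  "bval (Bc v) m = Some v"
| "bval (BNot b) m = map_option HOL.Not (bval b m)"
| "bval (BAnd b1 b2) m = (case (bval b1 m, bval b2 m) of (Some x, Some y) \<Rightarrow> Some (x \<and> y) | _ \<Rightarrow> None)"
| "bval (Less a1 a2) m = (case (aval a1 m, aval a2 m) of (Some x, Some y) \<Rightarrow> Some (x < y) | _ \<Rightarrow> None)"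

fun acost :: "aexp \<Rightarrow> nat" where
  "acost (N i) = 1"
| "acost (Rd a) = Suc (acost a)"
| "acost (Add a1 a2) = Suc (acost a1 + acost a2)"
| "acost (Sub a1 a2) = Suc (acost a1 + acost a2)"
| "acost (Mul a1 a2) = Suc (acost a1 + acost a2)"
| "acost (Dv a1 a2) = Suc (acost a1 + acost a2)"

fun bcost :: "bexp \<Rightarrow> nat" where
  "bcost (Bc v) = 1"
| "bcost (BNot b) = Suc (bcost b)"
| "bcost (BAnd b1 b2) = Suc (bcost b1 + bcost b2)"
| "bcost (Less a1 a2) = Suc (acost a1 + acost a2)"

inductive big_step :: "com \<Rightarrow> mem \<Rightarrow> nat \<Rightarrow> mem \<Rightarrow> bool" where
  Skip: "big_step SKIP m 1 m"
| Assign: "\<lbrakk> aval a m = Some (of_nat k); aval e m = Some v \<rbrakk> \<Longrightarrow>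
     big_step (Assign a e) m (Suc (acost a + acost e)) (m(k := v))"
| Seq: "\<lbrakk> big_step c1 m t1 m1; big_step c2 m1 t2 m2 \<rbrakk> \<Longrightarrow>
     big_step (Seq c1 c2) m (Suc (t1 + t2)) m2"
| IfTrue: "\<lbrakk> bval b m = Some True; big_step c1 m t m' \<rbrakk> \<Longrightarrow>
     big_step (If b c1 c2) m (Suc (bcost b + t)) m'"
| IfFalse: "\<lbrakk> bval b m = Some False; big_step c2 m t m' \<rbrakk> \<Longrightarrow>
     big_step (If b c1 c2) m (Suc (bcost b + t)) m'"
| WhileFalse: "bval b m = Some False \<Longrightarrow> big_step (While b c) m (Suc (bcost b)) m"
| WhileTrue: "\<lbrakk> bval b m = Some True; big_step c m t1 m1; big_step (While b c) m1 t2 m2 \<rbrakk> \<Longrightarrow>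
     big_step (While b c) m (Suc (bcost b + t1 + t2)) m2"

text \<open>Vertices are 0..<n (including s and t); E is the edge set;
  the weight of edge (u,v) is x \<mapsto> a u v * x + b u v.\<close>

definition scalar_gpp_instance ::
  "nat \<Rightarrow> (nat \<times> nat) set \<Rightarrow> nat \<Rightarrow> nat \<Rightarrow> bool" where
  "scalar_gpp_instance n E s t \<longleftrightarrow>
     E \<subseteq> {..<n} \<times> {..<n} \<and> acyclic E \<and> s < n \<and> t < n \<and> s \<noteq> t"

definition is_st_path :: "(nat \<times> nat) set \<Rightarrow> nat \<Rightarrow> nat \<Rightarrow> nat list \<Rightarrow> bool" where
  "is_st_path E s t vs \<longleftrightarrow> vs \<noteq> [] \<and> hd vs = s \<and> last vs = t \<and>
     (\<forall>i. Suc i < length vs \<longrightarrow> (vs ! i, vs ! Suc i) \<in> E)"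

text \<open>Parameter obtained by applying the edge weights along the path
  (first edge applied first).\<close>
fun path_apply :: "(nat \<Rightarrow> nat \<Rightarrow> real) \<Rightarrow> (nat \<Rightarrow> nat \<Rightarrow> real) \<Rightarrow> nat list \<Rightarrow> real \<Rightarrow> real" where
  "path_apply a b (u # v # rest) x = path_apply a b (v # rest) (a u v * x + b u v)"
| "path_apply a b _ x = x"

definition optimal_path ::
  "(nat \<times> nat) set \<Rightarrow> (nat \<Rightarrow> nat \<Rightarrow> real) \<Rightarrow> (nat \<Rightarrow> nat \<Rightarrow> real) \<Rightarrow> real \<Rightarrow> real
   \<Rightarrow> nat \<Rightarrow> nat \<Rightarrow> nat list \<Rightarrow> bool" where
  "optimal_path E a b L x0 s t vs \<longleftrightarrow> is_st_path E s t vs \<and>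
     (\<forall>ws. is_st_path E s t ws \<longrightarrow> L * path_apply a b ws x0 \<le> L * path_apply a b vs x0)"

text \<open>Input layout: cell 0 = n, 1 = s, 2 = t, 3 = L, 4 = x0; for u, v < n the three cells
  starting at 5 + 3*(u*n+v) hold: 1/0 (edge present or not), a_(u,v), b_(u,v)
  (the latter two are 0 if there is no edge). All other cells are 0.\<close>
definition encode_input ::
  "nat \<Rightarrow> (nat \<times> nat) set \<Rightarrow> (nat \<Rightarrow> nat \<Rightarrow> real) \<Rightarrow> (nat \<Rightarrow> nat \<Rightarrow> real) \<Rightarrow> real \<Rightarrow> real
   \<Rightarrow> nat \<Rightarrow> nat \<Rightarrow> mem" where
  "encode_input n E a b L x0 s t k =
     (if k = 0 then real n
      else if k = 1 then real s
      else if k = 2 then real t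
      else if k = 3 then L
      else if k = 4 then x0
      else (let j = k - 5; q = j div 3; r = j mod 3; u = q div n; v = q mod n in
            if q < n * n \<and> (u, v) \<in> E then
              (if r = 0 then 1 else if r = 1 then a u v else b u v)
            else 0))"

definition outputs_path :: "mem \<Rightarrow> nat list \<Rightarrow> bool" where
  "outputs_path m vs \<longleftrightarrow> m 0 = real (length vs) \<and> (\<forall>i < length vs. m (Suc i) = real (vs ! i))"

end

theory Submission
  imports Defs
begin

(* The algorithm is the textbook dynamic programme over path lengths. For every k < n and every
   vertex v it stores the largest and the smallest value that x_0 is transformed into along an
   s-v walk with exactly k edges, together with back pointers. Because every weight
   x \<mapsto> a x + b is monotone (increasing or decreasing according to the sign of a), the
   extreme values over walks with k + 1 edges ending in v are attained by extending an extreme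
   (maximal or minimal) walk with k edges ending in a predecessor u; so each layer is computed
   from the previous one in O(n^2) steps. As G is acyclic every s-t path has fewer than n edges,
   and since L x is monotone as well, an optimal path is one whose final value is an extreme entry
   at t maximising L x. The path is read off the back pointers. The loops of the program are
   nested at most three deep and each performs at most n iterations, whence the O(n^3) bound. *)

section \<open>Total correctness with explicit time bounds\<close>

definition wp_within :: "com \<Rightarrow> (mem \<Rightarrow> bool) \<Rightarrow> mem \<Rightarrow> nat \<Rightarrow> bool" where
  "wp_within c Q m T \<longleftrightarrow> (\<exists>t m'. big_step c m t m' \<and> t \<le> T \<and> Q m')"

definition hoare_within :: "(mem \<Rightarrow> bool) \<Rightarrow> com \<Rightarrow> (mem \<Rightarrow> bool) \<Rightarrow> nat \<Rightarrow> bool" where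
  "hoare_within P c Q T \<longleftrightarrow> (\<forall>m. P m \<longrightarrow> wp_within c Q m T)"

(* An upper bound on the running time of c, provided every loop in c performs at most n
   iterations. *)
fun time_bound :: "nat \<Rightarrow> com \<Rightarrow> nat" where
  "time_bound n SKIP = 1"
| "time_bound n (Assign x e) = Suc (acost x + acost e)"
| "time_bound n (Seq c1 c2) = Suc (time_bound n c1 + time_bound n c2)"
| "time_bound n (If bb c1 c2) = Suc (bcost bb + max (time_bound n c1) (time_bound n c2))"
| "time_bound n (While bb c) = (n + 1) * (time_bound n c + bcost bb + 1)"

fun loop_depth :: "com \<Rightarrow> nat" where
  "loop_depth (Seq c1 c2) = max (loop_depth c1) (loop_depth c2)"
| "loop_depth (If bb c1 c2) = max (loop_depth c1) (loop_depth c2)"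
| "loop_depth (While bb c) = Suc (loop_depth c)"
| "loop_depth _ = 0"

definition poly_bounded :: "(nat \<Rightarrow> nat) \<Rightarrow> nat \<Rightarrow> bool" where
  "poly_bounded f d \<longleftrightarrow> (\<exists>C. \<forall>n. f n \<le> C * (n + 1) ^ d)"

lemma poly_bounded_const: "poly_bounded (\<lambda>n. c) d"
  unfolding poly_bounded_def by (intro exI[of _ c] allI) simp

lemma poly_bounded_le: "poly_bounded g d \<Longrightarrow> (\<And>n. f n \<le> g n) \<Longrightarrow> poly_bounded f d"
  unfolding poly_bounded_def by (meson order_trans)

lemma poly_bounded_mono:
  assumes "poly_bounded f d" and "d \<le> d'"
  shows "poly_bounded f d'"
proof -
  obtain C where "\<forall>n. f n \<le> C * (n + 1) ^ d" using assms(1) unfolding poly_bounded_def by blast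
  moreover have "(n + 1) ^ d \<le> (n + 1) ^ d'" for n :: nat using assms(2) by (simp add: power_increasing)
  ultimately have "\<forall>n. f n \<le> C * (n + 1) ^ d'" by (meson mult_le_mono2 order_trans)
  then show ?thesis unfolding poly_bounded_def by blast
qed

lemma poly_bounded_add: "poly_bounded f d \<Longrightarrow> poly_bounded g d \<Longrightarrow> poly_bounded (\<lambda>n. f n + g n) d"
  unfolding poly_bounded_def by (metis (no_types) add_le_mono add_mult_distrib)

lemma poly_bounded_Suc: "poly_bounded f d \<Longrightarrow> poly_bounded (\<lambda>n. (n + 1) * f n) (Suc d)"
  unfolding poly_bounded_def by (metis (no_types) mult.left_commute mult_le_mono2 power_Suc)

lemma poly_bounded_time_bound: "poly_bounded (\<lambda>n. time_bound n c) (loop_depth c)"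
proof (induction c)
  case (Seq c1 c2)
  then have "poly_bounded (\<lambda>n. time_bound n c1) (loop_depth (Seq c1 c2))"
    "poly_bounded (\<lambda>n. time_bound n c2) (loop_depth (Seq c1 c2))"
    by (auto elim: poly_bounded_mono)
  then have "poly_bounded (\<lambda>n. 1 + time_bound n c1 + time_bound n c2) (loop_depth (Seq c1 c2))"
    by (intro poly_bounded_add poly_bounded_const)
  then show ?case by (rule poly_bounded_le) simp
next
  case (If bb c1 c2)
  then have "poly_bounded (\<lambda>n. time_bound n c1) (loop_depth (If bb c1 c2))"
    "poly_bounded (\<lambda>n. time_bound n c2) (loop_depth (If bb c1 c2))"
    by (auto elim: poly_bounded_mono)
  then have "poly_bounded (\<lambda>n. 1 + bcost bb + time_bound n c1 + time_bound n c2) (loop_depth (If bb c1 c2))"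
    by (intro poly_bounded_add poly_bounded_const)
  then show ?case by (rule poly_bounded_le) simp
next
  case (While bb c)
  then have "poly_bounded (\<lambda>n. (n + 1) * (time_bound n c + bcost bb + 1)) (Suc (loop_depth c))"
    by (intro poly_bounded_Suc poly_bounded_add poly_bounded_const)
  then show ?case by simp
qed (simp_all add: poly_bounded_const)

lemma wp_within_mono: "wp_within c Q m T \<Longrightarrow> T \<le> T' \<Longrightarrow> wp_within c Q m T'"
  unfolding wp_within_def by (meson order_trans)

lemma wp_within_post: "wp_within c Q m T \<Longrightarrow> (\<And>m. Q m \<Longrightarrow> Q' m) \<Longrightarrow> wp_within c Q' m T"
  unfolding wp_within_def by blast

lemma wp_within_skip: "Q m \<Longrightarrow> wp_within SKIP Q m (time_bound n SKIP)"
  unfolding wp_within_def using big_step.Skip by fastforce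

lemma wp_within_assign:
  "aval x m = Some (real k) \<Longrightarrow> aval e m = Some v \<Longrightarrow> Q (m(k := v))
   \<Longrightarrow> wp_within (Assign x e) Q m (time_bound n (Assign x e))"
  unfolding wp_within_def by (auto intro!: big_step.Assign)

lemma wp_within_seq:
  "wp_within c1 (\<lambda>m'. wp_within c2 Q m' (time_bound n c2)) m (time_bound n c1)
   \<Longrightarrow> wp_within (Seq c1 c2) Q m (time_bound n (Seq c1 c2))"
  unfolding wp_within_def by (fastforce intro: big_step.Seq)

lemma wp_within_if:
  assumes "bval bb m \<noteq> None"
    and "\<And>bv. bval bb m = Some bv \<Longrightarrow> bv \<Longrightarrow> wp_within c1 Q m (time_bound n c1)"
    and "\<And>bv. bval bb m = Some bv \<Longrightarrow> \<not> bv \<Longrightarrow> wp_within c2 Q m (time_bound n c2)"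
  shows "wp_within (If bb c1 c2) Q m (time_bound n (If bb c1 c2))"
proof -
  obtain bv where bv: "bval bb m = Some bv" using assms(1) by blast
  show ?thesis
  proof (cases bv)
    case True
    then obtain t m' where "big_step c1 m t m'" "t \<le> time_bound n c1" "Q m'"
      using assms(2) bv unfolding wp_within_def by blast
    with True bv show ?thesis unfolding wp_within_def by (fastforce intro: big_step.IfTrue)
  next
    case False
    then obtain t m' where "big_step c2 m t m'" "t \<le> time_bound n c2" "Q m'"
      using assms(3) bv unfolding wp_within_def by blast
    with False bv show ?thesis unfolding wp_within_def by (fastforce intro: big_step.IfFalse)
  qed
qed

lemma wp_within_for:
  assumes guard: "\<And>i m. I i m \<Longrightarrow> bval bb m = Some (i < K)"
    and body: "\<And>i m. I i m \<Longrightarrow> i < K \<Longrightarrow> wp_within c (I (Suc i)) m Tb"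
    and "I i m" and "i \<le> K"
  shows "wp_within (While bb c) (I K) m ((K - i + 1) * (Tb + bcost bb + 1))"
  using assms(3,4)
proof (induction "K - i" arbitrary: i m)
  case 0
  then have "i = K" by simp
  with guard[OF 0(2)] have "big_step (While bb c) m (Suc (bcost bb)) m"
    by (simp add: big_step.WhileFalse)
  then show ?case unfolding wp_within_def using 0 \<open>i = K\<close> by fastforce
next
  case (Suc d)
  then have iK: "i < K" by simp
  obtain t1 m1 where 1: "big_step c m t1 m1" "t1 \<le> Tb" "I (Suc i) m1"
    using body[OF Suc.prems(1) iK] unfolding wp_within_def by blast
  have "wp_within (While bb c) (I K) m1 ((K - Suc i + 1) * (Tb + bcost bb + 1))"
    using Suc.hyps(1)[of "Suc i" m1] Suc.hyps(2) 1(3) iK by simp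
  then obtain t2 m2 where 2: "big_step (While bb c) m1 t2 m2" "I K m2"
      "t2 \<le> (K - Suc i + 1) * (Tb + bcost bb + 1)"
    unfolding wp_within_def by blast
  have "big_step (While bb c) m (Suc (bcost bb + t1 + t2)) m2"
    using big_step.WhileTrue guard[OF Suc.prems(1)] iK 1(1) 2(1) by simp
  moreover have "Suc (bcost bb + t1 + t2) \<le> (K - i + 1) * (Tb + bcost bb + 1)"
    using 1(2) 2(3) Suc.hyps(2) by (simp add: Suc_diff_Suc[OF iK, symmetric])
  ultimately show ?case unfolding wp_within_def using 2(2) by blast
qed

lemma hoare_within_for:
  assumes "\<And>i m. I i m \<Longrightarrow> bval bb m = Some (i < K)" and "K \<le> n"
    and "\<And>i. i < K \<Longrightarrow> hoare_within (I i) c (I (Suc i)) (time_bound n c)"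
  shows "hoare_within (I 0) (While bb c) (I K) (time_bound n (While bb c))"
  unfolding hoare_within_def
proof (intro allI impI)
  fix m
  assume "I 0 m"
  with assms(1,3) have "wp_within (While bb c) (I K) m ((K + 1) * (time_bound n c + bcost bb + 1))"
    using wp_within_for[of I bb K c "time_bound n c" 0 m] unfolding hoare_within_def by auto
  moreover have "(K + 1) * (time_bound n c + bcost bb + 1) \<le> time_bound n (While bb c)"
    using assms(2) by (simp only: time_bound.simps) (intro mult_le_mono1, simp)
  ultimately show "wp_within (While bb c) (I K) m (time_bound n (While bb c))"
    by (rule wp_within_mono)
qed

section \<open>Memory layout and address expressions\<close>

(* Cells below work_base n hold the input (see encode_input). Above them lie 16 registers
   reg_addr n i, followed by the table: entry (k, v) occupies the 8 cells
   table_addr n off k v. Offset 0 flags that some s-v walk with k edges exists; offsets 1, 2, 3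
   hold the maximal value, its predecessor u, and the index w of the extreme of entry (k - 1, u)
   that it extends; offsets 4, 5, 6 hold the same data for the minimal value. Index w = 0 denotes
   the maximum and w = 1 the minimum, so the value with index w is stored at offset 1 + 3 w. *)

definition work_base :: "nat \<Rightarrow> nat" where
  "work_base n = 5 + 3 * n * n"

definition reg_addr :: "nat \<Rightarrow> nat \<Rightarrow> nat" where
  "reg_addr n i = work_base n + i"

definition table_addr :: "nat \<Rightarrow> nat \<Rightarrow> nat \<Rightarrow> nat \<Rightarrow> nat" where
  "table_addr n off k v = work_base n + 16 + 8 * (k * n + v) + off"

definition edge_addr :: "nat \<Rightarrow> nat \<Rightarrow> nat \<Rightarrow> nat \<Rightarrow> nat" where
  "edge_addr n u v r = 5 + 3 * (u * n + v) + r"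

definition size_ex :: aexp where
  "size_ex = Rd (N 0)"

definition reg_addr_ex :: "nat \<Rightarrow> aexp" where
  "reg_addr_ex i = Add (N (int (5 + i))) (Mul (N 3) (Mul size_ex size_ex))"

definition rd_reg :: "nat \<Rightarrow> aexp" where
  "rd_reg i = Rd (reg_addr_ex i)"

definition table_addr_dyn_ex :: "aexp \<Rightarrow> aexp \<Rightarrow> aexp \<Rightarrow> aexp" where
  "table_addr_dyn_ex oe ke ve =
     Add (Add (Add (N 21) oe) (Mul (N 3) (Mul size_ex size_ex))) (Mul (N 8) (Add (Mul ke size_ex) ve))"

definition table_addr_ex :: "nat \<Rightarrow> aexp \<Rightarrow> aexp \<Rightarrow> aexp" where
  "table_addr_ex off = table_addr_dyn_ex (N (int off))"

definition slot_ex :: "nat \<Rightarrow> nat \<Rightarrow> aexp" where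
  "slot_ex c i = Add (N (int c)) (Mul (N 3) (rd_reg i))"

definition edge_cell_ex :: "nat \<Rightarrow> aexp \<Rightarrow> aexp \<Rightarrow> aexp" where
  "edge_cell_ex r ue ve = Add (N (int (5 + r))) (Mul (N 3) (Add (Mul ue size_ex) ve))"

lemma aval_Rd_of_nat: "aval e m = Some (real j) \<Longrightarrow> aval (Rd e) m = Some (m j)"
  by simp

lemma aval_Rd_N_0 [simp]: "aval (Rd (N 0)) m = Some (m 0)"
  by (rule aval_Rd_of_nat) simp

lemma aval_Rd_N_1 [simp]: "aval (Rd (N 1)) m = Some (m 1)"
  by (rule aval_Rd_of_nat) simp

lemma aval_Rd_N_numeral [simp]: "aval (Rd (N (numeral k))) m = Some (m (numeral k))"
  by (rule aval_Rd_of_nat) simp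

lemma aval_size_ex [simp]: "m 0 = real n \<Longrightarrow> aval size_ex m = Some (real n)"
  by (simp add: size_ex_def)

lemma aval_reg_addr_ex [simp]: "m 0 = real n \<Longrightarrow> aval (reg_addr_ex i) m = Some (real (reg_addr n i))"
  by (simp add: reg_addr_ex_def reg_addr_def work_base_def)

lemma aval_rd_reg [simp]: "m 0 = real n \<Longrightarrow> aval (rd_reg i) m = Some (m (reg_addr n i))"
  unfolding rd_reg_def by (rule aval_Rd_of_nat, rule aval_reg_addr_ex)

lemma aval_table_addr_dyn_ex:
  "m 0 = real n \<Longrightarrow> aval oe m = Some (real off) \<Longrightarrow> aval ke m = Some (real k)
   \<Longrightarrow> aval ve m = Some (real v) \<Longrightarrow> aval (table_addr_dyn_ex oe ke ve) m = Some (real (table_addr n off k v))"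
  by (simp add: table_addr_dyn_ex_def table_addr_def work_base_def algebra_simps)

lemma aval_table_addr_ex [simp]:
  "m 0 = real n \<Longrightarrow> aval ke m = Some (real k) \<Longrightarrow> aval ve m = Some (real v)
   \<Longrightarrow> aval (table_addr_ex off ke ve) m = Some (real (table_addr n off k v))"
  unfolding table_addr_ex_def by (rule aval_table_addr_dyn_ex) simp_all

lemma aval_Rd_table_addr_ex [simp]:
  "m 0 = real n \<Longrightarrow> aval ke m = Some (real k) \<Longrightarrow> aval ve m = Some (real v)
   \<Longrightarrow> aval (Rd (table_addr_ex off ke ve)) m = Some (m (table_addr n off k v))"
  by (rule aval_Rd_of_nat, rule aval_table_addr_ex)

lemma aval_Rd_table_slot_ex [simp]:
  "m 0 = real n \<Longrightarrow> m (reg_addr n i) = real w \<Longrightarrow> aval ke m = Some (real k)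
   \<Longrightarrow> aval ve m = Some (real v)
   \<Longrightarrow> aval (Rd (table_addr_dyn_ex (slot_ex c i) ke ve)) m = Some (m (table_addr n (c + 3 * w) k v))"
  by (rule aval_Rd_of_nat, rule aval_table_addr_dyn_ex) (simp_all add: slot_ex_def)

lemma aval_Rd_edge_cell_ex [simp]:
  "m 0 = real n \<Longrightarrow> aval ue m = Some (real u) \<Longrightarrow> aval ve m = Some (real v)
   \<Longrightarrow> aval (Rd (edge_cell_ex r ue ve)) m = Some (m (edge_addr n u v r))"
  by (rule aval_Rd_of_nat) (simp add: edge_cell_ex_def edge_addr_def algebra_simps)

declare aval.simps(2) [simp del]

lemma pair_index_less: "(u::nat) < n \<Longrightarrow> v < n \<Longrightarrow> u * n + v < n * n"
proof -
  assume "u < n" "v < n"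
  then have "u * n + v < (u + 1) * n" by simp
  also have "\<dots> \<le> n * n" using \<open>u < n\<close> by (intro mult_right_mono) auto
  finally show ?thesis .
qed

lemma edge_addr_less_work_base: "u < n \<Longrightarrow> v < n \<Longrightarrow> r < 3 \<Longrightarrow> edge_addr n u v r < work_base n"
  using pair_index_less[of u n v] by (simp add: edge_addr_def work_base_def)

lemma table_addr_eq_iff [simp]:
  assumes "off < 8" "off' < 8" "v < n" "v' < n"
  shows "table_addr n off k v = table_addr n off' k' v' \<longleftrightarrow> off = off' \<and> k = k' \<and> v = v'"
proof
  assume "table_addr n off k v = table_addr n off' k' v'"
  then have e: "8 * (k * n + v) + off = 8 * (k' * n + v') + off'" by (simp add: table_addr_def)
  then have "off = off'" using assms(1,2) by presburger
  with e have kv: "k * n + v = k' * n + v'" by simp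
  then have "(k * n + v) mod n = (k' * n + v') mod n" by simp
  then have "v = v'" using assms(3,4) by simp
  with kv have "k = k'" using assms(3) by simp
  with \<open>off = off'\<close> \<open>v = v'\<close> show "off = off' \<and> k = k' \<and> v = v'" by simp
qed simp

lemma reg_addr_eq_iff [simp]: "reg_addr n i = reg_addr n j \<longleftrightarrow> i = j"
  by (simp add: reg_addr_def)

lemma reg_addr_ne_table_addr [simp]:
  "i < 16 \<Longrightarrow> reg_addr n i \<noteq> table_addr n off k v" "i < 16 \<Longrightarrow> table_addr n off k v \<noteq> reg_addr n i"
  by (auto simp: reg_addr_def table_addr_def)

lemma reg_addr_ne_below_work_base [simp]:
  "j < work_base n \<Longrightarrow> reg_addr n i \<noteq> j" "j < work_base n \<Longrightarrow> j \<noteq> reg_addr n i"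
  by (auto simp: reg_addr_def)

lemma table_addr_ne_below_work_base [simp]:
  "j < work_base n \<Longrightarrow> table_addr n off k v \<noteq> j" "j < work_base n \<Longrightarrow> j \<noteq> table_addr n off k v"
  by (auto simp: table_addr_def)

lemma small_less_work_base [simp]: "j < 5 \<Longrightarrow> j < work_base n"
  by (simp add: work_base_def)

lemma work_base_ne_0 [simp]: "work_base n \<noteq> 0"
  by (simp add: work_base_def)

lemma edge_addr_ne_reg_addr [simp]:
  "u < n \<Longrightarrow> v < n \<Longrightarrow> r < 3 \<Longrightarrow> reg_addr n i \<noteq> edge_addr n u v r"
  "u < n \<Longrightarrow> v < n \<Longrightarrow> r < 3 \<Longrightarrow> edge_addr n u v r \<noteq> reg_addr n i"
  using edge_addr_less_work_base[of u n v r] by (auto simp: reg_addr_def)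

lemma edge_addr_ne_table_addr [simp]:
  "u < n \<Longrightarrow> v < n \<Longrightarrow> r < 3 \<Longrightarrow> table_addr n off k w \<noteq> edge_addr n u v r"
  "u < n \<Longrightarrow> v < n \<Longrightarrow> r < 3 \<Longrightarrow> edge_addr n u v r \<noteq> table_addr n off k w"
  using edge_addr_less_work_base[of u n v r] by (auto simp: table_addr_def)

definition set_reg :: "nat \<Rightarrow> aexp \<Rightarrow> com" where
  "set_reg i e = Assign (reg_addr_ex i) e"

definition incr_reg :: "nat \<Rightarrow> com" where
  "incr_reg i = set_reg i (Add (rd_reg i) (N 1))"

definition Nonpos :: "aexp \<Rightarrow> bexp" where
  "Nonpos e = BNot (Less (N 0) e)"

definition BOr :: "bexp \<Rightarrow> bexp \<Rightarrow> bexp" where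
  "BOr b1 b2 = BNot (BAnd (BNot b1) (BNot b2))"

lemma bval_Nonpos [simp]: "aval e m = Some x \<Longrightarrow> bval (Nonpos e) m = Some (\<not> 0 < x)"
  by (simp add: Nonpos_def)

lemma bval_BOr [simp]: "bval b1 m = Some x \<Longrightarrow> bval b2 m = Some y \<Longrightarrow> bval (BOr b1 b2) m = Some (x \<or> y)"
  by (simp add: BOr_def)

lemma wp_within_set_reg:
  "m 0 = real n \<Longrightarrow> aval e m = Some x \<Longrightarrow> Q (m(reg_addr n i := x))
   \<Longrightarrow> wp_within (set_reg i e) Q m (time_bound n (set_reg i e))"
  unfolding set_reg_def by (rule wp_within_assign) simp_all

lemma wp_within_incr_reg:
  "m 0 = real n \<Longrightarrow> m (reg_addr n i) = real j \<Longrightarrow> Q (m(reg_addr n i := real j + 1))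
   \<Longrightarrow> wp_within (incr_reg i) Q m (time_bound n (incr_reg i))"
  unfolding incr_reg_def by (rule wp_within_set_reg) simp_all

section \<open>Walks in acyclic graphs and monotonicity of affine maps\<close>

abbreviation walk :: "('a \<times> 'a) set \<Rightarrow> 'a list \<Rightarrow> bool" where
  "walk E \<equiv> successively (\<lambda>u v. (u, v) \<in> E)"

lemma is_st_path_iff_walk: "is_st_path E s t p \<longleftrightarrow> p \<noteq> [] \<and> hd p = s \<and> last p = t \<and> walk E p"
  unfolding is_st_path_def successively_conv_nth by simp

lemma walk_trancl: "walk E p \<Longrightarrow> i < j \<Longrightarrow> j < length p \<Longrightarrow> (p ! i, p ! j) \<in> E\<^sup>+"
proof (induction j)
  case (Suc j)
  then have "(p ! j, p ! Suc j) \<in> E" using successively_nth[of "\<lambda>u v. (u, v) \<in> E"] by blast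
  with Suc show ?case by (cases "i = j") (auto intro: trancl_into_trancl)
qed simp

lemma distinct_walk_if_acyclic: "acyclic E \<Longrightarrow> walk E p \<Longrightarrow> distinct p"
  unfolding distinct_conv_nth acyclic_def
  by (metis linorder_neqE_nat walk_trancl)

lemma walk_set_subset: "E \<subseteq> A \<times> A \<Longrightarrow> walk E p \<Longrightarrow> p \<noteq> [] \<Longrightarrow> last p \<in> A \<Longrightarrow> set p \<subseteq> A"
  by (induction p rule: induct_list012) auto

lemma length_walk_le_card:
  "acyclic E \<Longrightarrow> walk E p \<Longrightarrow> set p \<subseteq> A \<Longrightarrow> finite A \<Longrightarrow> length p \<le> card A"
  by (metis card_mono distinct_card distinct_walk_if_acyclic)

lemma path_apply_snoc:
  "path_apply a b (p @ [w]) x = (if p = [] then x else a (last p) w * path_apply a b p x + b (last p) w)"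
  by (induction p arbitrary: x rule: induct_list012) simp_all

lemma affine_between_extremes:
  fixes c d x lo hi :: real
  assumes "lo \<le> x" "x \<le> hi"
  shows "min (c * hi + d) (c * lo + d) \<le> c * x + d \<and> c * x + d \<le> max (c * hi + d) (c * lo + d)"
proof (cases "c \<ge> 0")
  case True
  then have "c * lo \<le> c * x" "c * x \<le> c * hi" using assms by (simp_all add: mult_left_mono)
  then show ?thesis by linarith
next
  case False
  then have "c * x \<le> c * lo" "c * hi \<le> c * x" using assms by (simp_all add: mult_left_mono_neg)
  then show ?thesis by linarith
qed

section \<open>The program\<close>

(* Registers 0, 1, 2 are the loop counters k, v, u of the table construction and register 7 is
   scratch. The selection keeps in registers 3, 4, 5, 6 a found-flag and the best value of L x so
   far with its layer and extreme index; the reconstruction keeps the current layer, vertex,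
   extreme index and predecessor in registers 8, 9, 10, 11. *)

definition k_ex :: aexp where "k_ex = rd_reg 0"
definition v_ex :: aexp where "v_ex = rd_reg 1"
definition u_ex :: aexp where "u_ex = rd_reg 2"
definition k_pred_ex :: aexp where "k_pred_ex = Sub (rd_reg 0) (N 1)"

definition relax :: "nat \<Rightarrow> com" where
  "relax w =
    Seq (set_reg 7 (Add (Mul (Rd (edge_cell_ex 1 u_ex v_ex)) (Rd (table_addr_ex (1+3*w) k_pred_ex u_ex)))
                        (Rd (edge_cell_ex 2 u_ex v_ex))))
   (Seq (If (BOr (Nonpos (Rd (table_addr_ex 0 k_ex v_ex))) (Less (Rd (table_addr_ex 1 k_ex v_ex)) (rd_reg 7)))
          (Seq (Assign (table_addr_ex 1 k_ex v_ex) (rd_reg 7))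
            (Seq (Assign (table_addr_ex 2 k_ex v_ex) u_ex) (Assign (table_addr_ex 3 k_ex v_ex) (N (int w)))))
          SKIP)
   (Seq (If (BOr (Nonpos (Rd (table_addr_ex 0 k_ex v_ex))) (Less (rd_reg 7) (Rd (table_addr_ex 4 k_ex v_ex))))
          (Seq (Assign (table_addr_ex 4 k_ex v_ex) (rd_reg 7))
            (Seq (Assign (table_addr_ex 5 k_ex v_ex) u_ex) (Assign (table_addr_ex 6 k_ex v_ex) (N (int w)))))
          SKIP)
     (Assign (table_addr_ex 0 k_ex v_ex) (N 1))))"

definition u_guard :: bexp where
  "u_guard =
    BAnd (Less (N 0) (Rd (edge_cell_ex 0 u_ex v_ex))) (Less (N 0) (Rd (table_addr_ex 0 k_pred_ex u_ex)))"

definition u_body :: com where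
  "u_body = Seq (If u_guard (Seq (relax 0) (relax 1)) SKIP) (incr_reg 2)"

definition u_loop :: com where
  "u_loop = While (Less u_ex size_ex) u_body"

definition v_body :: com where
  "v_body = Seq (Assign (table_addr_ex 0 k_ex v_ex) (N 0)) (Seq (set_reg 2 (N 0)) (Seq u_loop (incr_reg 1)))"

definition v_loop :: com where
  "v_loop = While (Less v_ex size_ex) v_body"

definition k_body :: com where
  "k_body = Seq (set_reg 1 (N 0)) (Seq v_loop (incr_reg 0))"

definition k_loop :: com where
  "k_loop = While (Less k_ex size_ex) k_body"

definition init_tables :: com where
  "init_tables =
    Seq (Assign (table_addr_ex 0 (N 0) (Rd (N 1))) (N 1))
   (Seq (Assign (table_addr_ex 1 (N 0) (Rd (N 1))) (Rd (N 4)))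
   (Seq (Assign (table_addr_ex 4 (N 0) (Rd (N 1))) (Rd (N 4)))
     (set_reg 0 (N 1))))"

definition fill_tables :: com where
  "fill_tables = Seq init_tables k_loop"

definition select_step :: "nat \<Rightarrow> com" where
  "select_step w =
    Seq (set_reg 7 (Mul (Rd (N 3)) (Rd (table_addr_ex (1+3*w) k_ex (Rd (N 2))))))
      (If (BOr (Nonpos (rd_reg 3)) (Less (rd_reg 4) (rd_reg 7)))
         (Seq (set_reg 4 (rd_reg 7)) (Seq (set_reg 5 k_ex) (Seq (set_reg 6 (N (int w))) (set_reg 3 (N 1)))))
         SKIP)"

definition s_guard :: bexp where
  "s_guard = Less (N 0) (Rd (table_addr_ex 0 k_ex (Rd (N 2))))"

definition s_body :: com where
  "s_body = Seq (If s_guard (Seq (select_step 0) (select_step 1)) SKIP) (incr_reg 0)"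

definition s_loop :: com where
  "s_loop = While (Less k_ex size_ex) s_body"

definition select_best :: com where
  "select_best = Seq (set_reg 3 (N 0)) (Seq (set_reg 0 (N 0)) s_loop)"

(* The vertex of layer K is written to cell K + 1, so the path ends up in the output cells
   1, 2, ..., overwriting input cells that are no longer needed. *)
definition r_body :: com where
  "r_body =
    Seq (Assign (Add (rd_reg 8) (N 1)) (rd_reg 9))
   (Seq (set_reg 11 (Rd (table_addr_dyn_ex (slot_ex 2 10) (rd_reg 8) (rd_reg 9))))
   (Seq (set_reg 10 (Rd (table_addr_dyn_ex (slot_ex 3 10) (rd_reg 8) (rd_reg 9))))
   (Seq (set_reg 9 (rd_reg 11))
     (set_reg 8 (Sub (rd_reg 8) (N 1))))))"

definition r_loop :: com where
  "r_loop = While (Less (N 0) (rd_reg 8)) r_body"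

definition write_output :: com where
  "write_output = Seq (Assign (N 1) (rd_reg 9)) (Assign (N 0) (Add (rd_reg 5) (N 1)))"

definition trace_back :: com where
  "trace_back = Seq r_loop write_output"

definition reconstruct :: com where
  "reconstruct =
    Seq (set_reg 8 (rd_reg 5)) (Seq (set_reg 9 (Rd (N 2))) (Seq (set_reg 10 (rd_reg 6)) trace_back))"

definition gpp_program :: com where
  "gpp_program = Seq fill_tables (Seq select_best reconstruct)"

section \<open>Walks from s in a fixed instance\<close>

locale scalar_gpp =
  fixes n :: nat and E :: "(nat \<times> nat) set" and a b :: "nat \<Rightarrow> nat \<Rightarrow> real"
    and L x0 :: real and s t :: nat
  assumes inst: "scalar_gpp_instance n E s t"
begin

abbreviation tab :: "nat \<Rightarrow> nat \<Rightarrow> nat \<Rightarrow> nat" where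
  "tab q k v \<equiv> table_addr n q k v"

abbreviation reg :: "nat \<Rightarrow> nat" where
  "reg i \<equiv> reg_addr n i"

abbreviation enc :: mem where
  "enc \<equiv> encode_input n E a b L x0 s t"

abbreviation walk_value :: "nat list \<Rightarrow> real" where
  "walk_value p \<equiv> path_apply a b p x0"

definition s_walk :: "nat \<Rightarrow> nat \<Rightarrow> nat list \<Rightarrow> bool" where
  "s_walk k v p \<longleftrightarrow> length p = Suc k \<and> hd p = s \<and> last p = v \<and> walk E p"

lemma edge_bound: "(u, v) \<in> E \<Longrightarrow> u < n \<and> v < n"
  using inst unfolding scalar_gpp_instance_def by auto

lemma st_bound: "s < n" "t < n" "s \<noteq> t"
  using inst unfolding scalar_gpp_instance_def by auto

lemma two_le_n: "2 \<le> n"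
  using st_bound by linarith

lemma s_walk_0: "s_walk 0 v p \<Longrightarrow> p = [s] \<and> v = s"
  unfolding s_walk_def by (cases p) auto

lemma s_walk_Suc:
  assumes "s_walk (Suc k) v p"
  obtains p' u where "p = p' @ [v]" "s_walk k u p'" "(u, v) \<in> E" "u < n"
proof -
  from assms have len: "length p = Suc (Suc k)" and "hd p = s" "last p = v" "walk E p"
    unfolding s_walk_def by auto
  obtain p' w where "p = p' @ [w]"
    using len by (cases p rule: rev_cases) auto
  with len \<open>last p = v\<close> have p: "p = p' @ [v]" and "p' \<noteq> []" by auto
  with \<open>walk E p\<close> have "walk E p'" "(last p', v) \<in> E"
    by (auto simp: successively_append_iff)
  moreover have "s_walk k (last p') p'"
    using p len \<open>hd p = s\<close> \<open>p' \<noteq> []\<close> \<open>walk E p'\<close> unfolding s_walk_def by auto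
  ultimately show thesis using that p edge_bound by blast
qed

lemma walk_value_snoc: "p \<noteq> [] \<Longrightarrow> walk_value (p @ [v]) = a (last p) v * walk_value p + b (last p) v"
  by (simp add: path_apply_snoc)

lemma st_path_s_walk:
  assumes "is_st_path E s t p"
  shows "s_walk (length p - 1) t p" and "length p - 1 < n"
proof -
  from assms have "walk E p" "p \<noteq> []" "hd p = s" "last p = t"
    by (auto simp: is_st_path_iff_walk)
  then show "s_walk (length p - 1) t p" unfolding s_walk_def by simp
  have "E \<subseteq> {..<n} \<times> {..<n}" using edge_bound by auto
  then have "set p \<subseteq> {..<n}"
    using walk_set_subset[of E "{..<n}" p] \<open>walk E p\<close> \<open>p \<noteq> []\<close> \<open>last p = t\<close> st_bound(2)
    by simp
  moreover have "acyclic E" using inst unfolding scalar_gpp_instance_def by blast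
  ultimately have "length p \<le> card {..<n}"
    using length_walk_le_card \<open>walk E p\<close> by blast
  then have "length p \<le> n" by simp
  then show "length p - 1 < n" using two_le_n by linarith
qed

lemma enc_header: "enc 0 = real n" "enc 1 = real s" "enc 2 = real t" "enc 3 = L" "enc 4 = x0"
  by (simp_all add: encode_input_def)

lemma enc_edge_addr:
  assumes "u < n" "v < n" "r < 3"
  shows "enc (edge_addr n u v r) =
    (if (u, v) \<in> E then (if r = 0 then 1 else if r = 1 then a u v else b u v) else 0)"
proof -
  define j where "j = edge_addr n u v r"
  have "(j - 5) div 3 = u * n + v" "(j - 5) mod 3 = r" "j \<ge> 5"
    using assms by (simp_all add: edge_addr_def j_def)
  moreover have "(u * n + v) div n = u" "(u * n + v) mod n = v" "u * n + v < n * n"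
    using assms pair_index_less by simp_all
  ultimately have "enc j =
      (if (u, v) \<in> E then (if r = 0 then 1 else if r = 1 then a u v else b u v) else 0)"
    unfolding encode_input_def Let_def by simp
  then show ?thesis by (simp add: j_def)
qed

lemma enc_beyond_work_base: "work_base n \<le> j \<Longrightarrow> enc j = 0"
proof -
  assume "work_base n \<le> j"
  then have "n * n \<le> (j - 5) div 3" by (simp add: work_base_def)
  with \<open>work_base n \<le> j\<close> show ?thesis unfolding encode_input_def Let_def by (auto simp: work_base_def)
qed

section \<open>Relaxing the edges into one vertex\<close>

(* Throughout, entry (k, v) of the table in memory m is computed from layer kp = k - 1 of the
   table in memory mp. *)
definition cand_value :: "mem \<Rightarrow> nat \<Rightarrow> nat \<Rightarrow> nat \<Rightarrow> nat \<Rightarrow> real" where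
  "cand_value mp kp u v f = a u v * mp (tab (1 + 3 * f) kp u) + b u v"

definition back_pointer :: "mem \<Rightarrow> nat \<Rightarrow> nat \<Rightarrow> nat \<Rightarrow> nat \<Rightarrow> nat \<Rightarrow> nat \<Rightarrow> mem \<Rightarrow> bool" where
  "back_pointer mp kp k v o1 o2 o3 m \<longleftrightarrow> (\<exists>u f. u < n \<and> f \<le> 1 \<and> (u, v) \<in> E
     \<and> m (tab o2 k v) = real u \<and> m (tab o3 k v) = real f
     \<and> mp (tab 0 kp u) = 1 \<and> m (tab o1 k v) = cand_value mp kp u v f)"

definition relax_inv :: "mem \<Rightarrow> nat \<Rightarrow> nat \<Rightarrow> nat \<Rightarrow> (nat \<times> nat) set \<Rightarrow> mem \<Rightarrow> bool" where
  "relax_inv mp kp k v S m \<longleftrightarrow>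
     (m (tab 0 k v) = 0 \<or> m (tab 0 k v) = 1) \<and> (m (tab 0 k v) = 1 \<longleftrightarrow> S \<noteq> {})
   \<and> (m (tab 0 k v) = 1 \<longrightarrow> back_pointer mp kp k v 1 2 3 m \<and> back_pointer mp kp k v 4 5 6 m)
   \<and> (\<forall>(u, f)\<in>S. m (tab 4 k v) \<le> cand_value mp kp u v f \<and> cand_value mp kp u v f \<le> m (tab 1 k v))"

definition relax_cells :: "nat \<Rightarrow> nat \<Rightarrow> nat set" where
  "relax_cells k v = insert (reg 7) ((\<lambda>q. tab q k v) ` {..<8})"

lemma relax_cells_mem [simp]: "reg 7 \<in> relax_cells k v" "q < 8 \<Longrightarrow> tab q k v \<in> relax_cells k v"
  by (auto simp: relax_cells_def)

lemma below_work_base_notin_relax_cells [simp]: "j < work_base n \<Longrightarrow> j \<notin> relax_cells k v"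
  by (auto simp: relax_cells_def table_addr_def reg_addr_def)

lemma reg_in_relax_cells [simp]: "i < 16 \<Longrightarrow> reg i \<in> relax_cells k v \<longleftrightarrow> i = 7"
  by (auto simp: relax_cells_def)

lemma edge_addr_notin_relax_cells [simp]: "u < n \<Longrightarrow> v < n \<Longrightarrow> r < 3 \<Longrightarrow> edge_addr n u v r \<notin> relax_cells k v'"
  by (auto simp: relax_cells_def)

lemma tab_in_relax_cells [simp]:
  "q < 8 \<Longrightarrow> v' < n \<Longrightarrow> v < n \<Longrightarrow> tab q k' v' \<in> relax_cells k v \<longleftrightarrow> k' = k \<and> v' = v"
  by (auto simp: relax_cells_def)

lemma relax_inv_cong:
  assumes "\<And>q. q < 8 \<Longrightarrow> m1 (tab q k v) = m2 (tab q k v)"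
  shows "relax_inv mp kp k v S m1 = relax_inv mp kp k v S m2"
  using assms[of 0] assms[of 1] assms[of 2] assms[of 3] assms[of 4] assms[of 5] assms[of 6]
  unfolding relax_inv_def back_pointer_def by simp

(* The hypotheses on m' describe the effect of relax w on entry (k, v), with candidate value c. *)
lemma relax_inv_insert:
  assumes inv: "relax_inv mp kp k v S m" and "u < n" "w \<le> 1" "(u, v) \<in> E" "mp (tab 0 kp u) = 1"
    and c: "c = a u v * mp (tab (1 + 3 * w) kp u) + b u v"
    and flag: "m' (tab 0 k v) = 1"
    and hi: "if \<not> 0 < m (tab 0 k v) \<or> m (tab 1 k v) < c
      then m' (tab 1 k v) = c \<and> m' (tab 2 k v) = real u \<and> m' (tab 3 k v) = real w
      else m' (tab 1 k v) = m (tab 1 k v) \<and> m' (tab 2 k v) = m (tab 2 k v) \<and> m' (tab 3 k v) = m (tab 3 k v)"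
    and lo: "if \<not> 0 < m (tab 0 k v) \<or> c < m (tab 4 k v)
      then m' (tab 4 k v) = c \<and> m' (tab 5 k v) = real u \<and> m' (tab 6 k v) = real w
      else m' (tab 4 k v) = m (tab 4 k v) \<and> m' (tab 5 k v) = m (tab 5 k v) \<and> m' (tab 6 k v) = m (tab 6 k v)"
  shows "relax_inv mp kp k v (insert (u, w) S) m'"
proof -
  have c': "c = cand_value mp kp u v w" using c by (simp add: cand_value_def)
  have new_hi: "back_pointer mp kp k v 1 2 3 m'" if "\<not> 0 < m (tab 0 k v) \<or> m (tab 1 k v) < c"
    unfolding back_pointer_def using that hi assms(2-5) c' by (intro exI[of _ u] exI[of _ w]) auto
  have new_lo: "back_pointer mp kp k v 4 5 6 m'" if "\<not> 0 < m (tab 0 k v) \<or> c < m (tab 4 k v)"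
    unfolding back_pointer_def using that lo assms(2-5) c' by (intro exI[of _ u] exI[of _ w]) auto
  show ?thesis
  proof (cases "m (tab 0 k v) = 1")
    case False
    then have "m (tab 0 k v) = 0" "S = {}" using inv unfolding relax_inv_def by auto
    then show ?thesis using new_hi new_lo hi lo flag unfolding relax_inv_def by (simp add: c')
  next
    case True
    then have old: "back_pointer mp kp k v 1 2 3 m" "back_pointer mp kp k v 4 5 6 m"
      and bounds: "\<forall>(u', f)\<in>S. m (tab 4 k v) \<le> cand_value mp kp u' v f
        \<and> cand_value mp kp u' v f \<le> m (tab 1 k v)"
      using inv unfolding relax_inv_def by auto
    have "back_pointer mp kp k v 1 2 3 m'"
      using new_hi old(1) hi True unfolding back_pointer_def by (cases "m (tab 1 k v) < c") auto
    moreover have "back_pointer mp kp k v 4 5 6 m'"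
      using new_lo old(2) lo True unfolding back_pointer_def by (cases "c < m (tab 4 k v)") auto
    moreover have "m (tab 1 k v) \<le> m' (tab 1 k v)" "c \<le> m' (tab 1 k v)"
      "m' (tab 4 k v) \<le> m (tab 4 k v)" "m' (tab 4 k v) \<le> c"
      using hi lo True by (auto split: if_splits)
    with bounds c' have "\<forall>(u', f)\<in>insert (u, w) S.
        m' (tab 4 k v) \<le> cand_value mp kp u' v f \<and> cand_value mp kp u' v f \<le> m' (tab 1 k v)"
      by fastforce
    ultimately show ?thesis using flag unfolding relax_inv_def by simp
  qed
qed

lemma wp_relax:
  assumes "m 0 = real n" "m (reg 0) = real k" "real k - 1 = real kp" "m (reg 1) = real v" "m (reg 2) = real u"
    and "v < n" "u < n" "w \<le> 1" "(u, v) \<in> E" "m (edge_addr n u v 1) = a u v" "m (edge_addr n u v 2) = b u v"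
    and "mp (tab 0 kp u) = 1" "m (tab (1 + 3 * w) kp u) = mp (tab (1 + 3 * w) kp u)"
    and inv: "relax_inv mp kp k v S m"
  shows "wp_within (relax w)
    (\<lambda>m'. relax_inv mp kp k v (insert (u, w) S) m' \<and> (\<forall>j. j \<notin> relax_cells k v \<longrightarrow> m' j = m j))
    m (time_bound n (relax w))"
  unfolding relax_def set_reg_def k_ex_def v_ex_def u_ex_def k_pred_ex_def using assms
  by - (rule wp_within_seq wp_within_assign wp_within_if wp_within_skip
      conjI[OF relax_inv_insert[OF inv assms(7,8,9,12)]] | simp)+

definition relaxed_preds :: "mem \<Rightarrow> nat \<Rightarrow> nat \<Rightarrow> nat \<Rightarrow> (nat \<times> nat) set" where
  "relaxed_preds mp kp v i = {(u, f). u < i \<and> (u, v) \<in> E \<and> mp (tab 0 kp u) = 1 \<and> f \<le> 1}"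

definition u_pre :: "mem \<Rightarrow> mem \<Rightarrow> nat \<Rightarrow> nat \<Rightarrow> nat \<Rightarrow> bool" where
  "u_pre mv mp kp k v \<longleftrightarrow> mv 0 = real n \<and> mv (reg 0) = real k \<and> real k - 1 = real kp \<and> kp \<noteq> k
    \<and> mv (reg 1) = real v \<and> v < n
    \<and> (\<forall>u<n. mv (edge_addr n u v 0) = (if (u, v) \<in> E then 1 else 0)
        \<and> ((u, v) \<in> E \<longrightarrow> mv (edge_addr n u v 1) = a u v \<and> mv (edge_addr n u v 2) = b u v))
    \<and> (\<forall>u<n. \<forall>q<8. mv (tab q kp u) = mp (tab q kp u))
    \<and> (\<forall>u<n. mp (tab 0 kp u) = 0 \<or> mp (tab 0 kp u) = 1)"

definition u_inv :: "mem \<Rightarrow> mem \<Rightarrow> nat \<Rightarrow> nat \<Rightarrow> nat \<Rightarrow> nat \<Rightarrow> mem \<Rightarrow> bool" where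
  "u_inv mv mp kp k v i m \<longleftrightarrow> (\<forall>j. j \<notin> insert (reg 2) (relax_cells k v) \<longrightarrow> m j = mv j)
     \<and> m (reg 2) = real i \<and> i \<le> n \<and> relax_inv mp kp k v (relaxed_preds mp kp v i) m"

lemma u_pre_facts:
  assumes "u_pre mv mp kp k v" and "\<forall>j. j \<notin> insert (reg 2) (relax_cells k v) \<longrightarrow> m j = mv j"
  shows "m 0 = real n" "m (reg 0) = real k" "m (reg 1) = real v"
    "\<And>u. u < n \<Longrightarrow> m (edge_addr n u v 0) = (if (u, v) \<in> E then 1 else 0)"
    "\<And>u. u < n \<Longrightarrow> (u, v) \<in> E \<Longrightarrow> m (edge_addr n u v 1) = a u v"
    "\<And>u. u < n \<Longrightarrow> (u, v) \<in> E \<Longrightarrow> m (edge_addr n u v 2) = b u v"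
    "\<And>u q. u < n \<Longrightarrow> q < 8 \<Longrightarrow> m (tab q kp u) = mp (tab q kp u)"
  using assms by (auto simp: u_pre_def)

lemma relaxed_preds_Suc:
  "relaxed_preds mp kp v (Suc i) = (if (i, v) \<in> E \<and> mp (tab 0 kp i) = 1
     then insert (i, 1) (insert (i, 0) (relaxed_preds mp kp v i)) else relaxed_preds mp kp v i)"
  by (auto simp: relaxed_preds_def less_Suc_eq)

lemma bval_u_guard:
  assumes "u_pre mv mp kp k v" and "u_inv mv mp kp k v i m" and "i < n"
  shows "bval u_guard m = Some ((i, v) \<in> E \<and> mp (tab 0 kp i) = 1)"
proof -
  have "\<forall>j. j \<notin> insert (reg 2) (relax_cells k v) \<longrightarrow> m j = mv j" "m (reg 2) = real i"
    using assms(2) unfolding u_inv_def by auto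
  note facts = u_pre_facts[OF assms(1) this(1)] this(2)
  have "mp (tab 0 kp i) = 0 \<or> mp (tab 0 kp i) = 1" "real k - 1 = real kp"
    using assms(1,3) unfolding u_pre_def by auto
  with facts assms(3) show ?thesis
    by (auto simp: u_guard_def u_ex_def v_ex_def k_pred_ex_def)
qed

lemma wp_u_body_incr:
  assumes "u_pre mv mp kp k v" and "u_inv mv mp kp k v i m" and "i < n"
    and "\<forall>j. j \<notin> relax_cells k v \<longrightarrow> m' j = m j" and "relax_inv mp kp k v (relaxed_preds mp kp v (Suc i)) m'"
  shows "wp_within (incr_reg 2) (u_inv mv mp kp k v (Suc i)) m' (time_bound n (incr_reg 2))"
proof (rule wp_within_incr_reg)
  have fr: "\<forall>j. j \<notin> insert (reg 2) (relax_cells k v) \<longrightarrow> m j = mv j" and "m (reg 2) = real i"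
    using assms(2) unfolding u_inv_def by auto
  with assms(4) u_pre_facts(1)[OF assms(1) fr] show "m' 0 = real n" "m' (reg 2) = real i" by auto
  have "relax_inv mp kp k v (relaxed_preds mp kp v (Suc i)) (m'(reg 2 := real i + 1))"
    using assms(5) by (subst relax_inv_cong) simp_all
  with fr assms(3,4) show "u_inv mv mp kp k v (Suc i) (m'(reg 2 := real i + 1))"
    unfolding u_inv_def by simp
qed

lemma wp_u_body:
  assumes pre: "u_pre mv mp kp k v" and inv: "u_inv mv mp kp k v i m" and "i < n"
  shows "wp_within u_body (u_inv mv mp kp k v (Suc i)) m (time_bound n u_body)"
  unfolding u_body_def
proof (rule wp_within_seq, rule wp_within_if)
  show "bval u_guard m \<noteq> None" using bval_u_guard[OF assms] by simp
next
  fix bv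
  assume "bval u_guard m = Some bv" "\<not> bv"
  with bval_u_guard[OF assms] have "relaxed_preds mp kp v (Suc i) = relaxed_preds mp kp v i"
    by (auto simp: relaxed_preds_Suc)
  with inv show "wp_within SKIP (\<lambda>m'. wp_within (incr_reg 2) (u_inv mv mp kp k v (Suc i)) m'
      (time_bound n (incr_reg 2))) m (time_bound n SKIP)"
    using wp_u_body_incr[OF assms] by (intro wp_within_skip) (simp add: u_inv_def)
next
  fix bv
  assume "bval u_guard m = Some bv" "bv"
  with bval_u_guard[OF assms] have edge: "(i, v) \<in> E" "mp (tab 0 kp i) = 1" by auto
  have fr: "\<forall>j. j \<notin> insert (reg 2) (relax_cells k v) \<longrightarrow> m j = mv j" and "m (reg 2) = real i"
    and "relax_inv mp kp k v (relaxed_preds mp kp v i) m"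
    using inv unfolding u_inv_def by auto
  have "real k - 1 = real kp" "kp \<noteq> k" "v < n" using pre unfolding u_pre_def by auto
  note facts = this u_pre_facts[OF pre fr] \<open>m (reg 2) = real i\<close> \<open>i < n\<close> edge
  have relax0: "wp_within (relax 0) (\<lambda>m'. relax_inv mp kp k v (insert (i, 0) (relaxed_preds mp kp v i)) m'
      \<and> (\<forall>j. j \<notin> relax_cells k v \<longrightarrow> m' j = m j)) m (time_bound n (relax 0))"
    by (rule wp_relax) (use facts \<open>relax_inv mp kp k v (relaxed_preds mp kp v i) m\<close> in auto)
  show "wp_within (Seq (relax 0) (relax 1)) (\<lambda>m'. wp_within (incr_reg 2) (u_inv mv mp kp k v (Suc i)) m'
      (time_bound n (incr_reg 2))) m (time_bound n (Seq (relax 0) (relax 1)))"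
  proof (rule wp_within_seq, rule wp_within_post[OF relax0], elim conjE)
    fix m1
    assume inv1: "relax_inv mp kp k v (insert (i, 0) (relaxed_preds mp kp v i)) m1"
      and fr1: "\<forall>j. j \<notin> relax_cells k v \<longrightarrow> m1 j = m j"
    then have "\<forall>j. j \<notin> insert (reg 2) (relax_cells k v) \<longrightarrow> m1 j = mv j" using fr by auto
    note facts1 = u_pre_facts[OF pre this]
    have "wp_within (relax 1)
        (\<lambda>m'. relax_inv mp kp k v (insert (i, 1) (insert (i, 0) (relaxed_preds mp kp v i))) m'
        \<and> (\<forall>j. j \<notin> relax_cells k v \<longrightarrow> m' j = m1 j)) m1 (time_bound n (relax 1))"
      by (rule wp_relax) (use facts facts1 fr1 inv1 in auto)
    then show "wp_within (relax 1) (\<lambda>m'. wp_within (incr_reg 2) (u_inv mv mp kp k v (Suc i)) m'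
        (time_bound n (incr_reg 2))) m1 (time_bound n (relax 1))"
      using wp_u_body_incr[OF assms] fr1 edge by (auto simp: relaxed_preds_Suc elim!: wp_within_post)
  qed
qed

lemma hoare_u_loop:
  assumes "u_pre mv mp kp k v"
  shows "hoare_within (u_inv mv mp kp k v 0) u_loop (u_inv mv mp kp k v n) (time_bound n u_loop)"
  unfolding u_loop_def
proof (rule hoare_within_for)
  fix i m
  assume ui: "u_inv mv mp kp k v i m"
  then have "m 0 = real n" using u_pre_facts(1)[OF assms] unfolding u_inv_def by blast
  with ui show "bval (Less u_ex size_ex) m = Some (i < n)" by (simp add: u_inv_def u_ex_def)
next
  fix i
  assume "i < n"
  then show "hoare_within (u_inv mv mp kp k v i) u_body (u_inv mv mp kp k v (Suc i)) (time_bound n u_body)"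
    unfolding hoare_within_def using wp_u_body[OF assms] by blast
qed simp

section \<open>The table invariant\<close>

definition entry_ok :: "mem \<Rightarrow> mem \<Rightarrow> nat \<Rightarrow> nat \<Rightarrow> bool" where
  "entry_ok m mp k v \<longleftrightarrow> (m (tab 0 k v) = 0 \<or> m (tab 0 k v) = 1)
    \<and> (m (tab 0 k v) = 1 \<longrightarrow>
        (if k = 0 then v = s \<and> m (tab 1 0 v) = x0 \<and> m (tab 4 0 v) = x0
         else back_pointer mp (k - 1) k v 1 2 3 m \<and> back_pointer mp (k - 1) k v 4 5 6 m))
    \<and> (\<forall>p. s_walk k v p \<longrightarrow> m (tab 0 k v) = 1
        \<and> m (tab 4 k v) \<le> walk_value p \<and> walk_value p \<le> m (tab 1 k v))"

definition tables_ok :: "mem \<Rightarrow> nat \<Rightarrow> bool" where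
  "tables_ok m k \<longleftrightarrow> (\<forall>j<k. \<forall>v<n. entry_ok m m j v)"

lemma back_pointer_cong:
  assumes "m1 (tab o1 k v) = m2 (tab o1 k v)"
    "m1 (tab o2 k v) = m2 (tab o2 k v)" "m1 (tab o3 k v) = m2 (tab o3 k v)"
    and "\<And>q u. q < 8 \<Longrightarrow> u < n \<Longrightarrow> mp1 (tab q kp u) = mp2 (tab q kp u)"
  shows "back_pointer mp1 kp k v o1 o2 o3 m1 = back_pointer mp2 kp k v o1 o2 o3 m2"
proof -
  have "mp1 (tab 0 kp u) = mp2 (tab 0 kp u)
    \<and> mp1 (tab (1 + 3 * f) kp u) = mp2 (tab (1 + 3 * f) kp u)"
    if "u < n" "f \<le> 1" for u f
    using assms(4) that by simp
  then show ?thesis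
    unfolding back_pointer_def cand_value_def using assms(1-3) by (metis (no_types, lifting))
qed

lemma entry_ok_cong:
  assumes "\<And>q. q < 8 \<Longrightarrow> m1 (tab q k v) = m2 (tab q k v)"
    and "\<And>q u. q < 8 \<Longrightarrow> u < n \<Longrightarrow> mp1 (tab q (k - 1) u) = mp2 (tab q (k - 1) u)"
  shows "entry_ok m1 mp1 k v = entry_ok m2 mp2 k v"
proof -
  have "back_pointer mp1 (k - 1) k v o1 o2 o3 m1 = back_pointer mp2 (k - 1) k v o1 o2 o3 m2"
    if "o1 < 8" "o2 < 8" "o3 < 8" for o1 o2 o3
    using that assms by (intro back_pointer_cong) simp_all
  note bp = this
  show ?thesis
  proof (cases "k = 0")
    case True
    then show ?thesis unfolding entry_ok_def using assms(1)[of 0] assms(1)[of 1] assms(1)[of 4] by simp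
  next
    case False
    then show ?thesis unfolding entry_ok_def using bp assms(1)[of 0] assms(1)[of 1] assms(1)[of 4] by simp
  qed
qed

(* Since the weight of (u, v) is monotone, the two extremes of entry (kp, u) are mapped to values
   enclosing the value of any extension of an s-u walk with kp edges. *)
lemma walk_value_snoc_between:
  assumes "entry_ok mp mp kp u" "s_walk kp u p"
  shows "min (cand_value mp kp u v 0) (cand_value mp kp u v 1) \<le> walk_value (p @ [v])
    \<and> walk_value (p @ [v]) \<le> max (cand_value mp kp u v 0) (cand_value mp kp u v 1)"
proof -
  from assms have "mp (tab 4 kp u) \<le> walk_value p" "walk_value p \<le> mp (tab 1 kp u)"
    unfolding entry_ok_def by auto
  moreover have "p \<noteq> []" "last p = u" using assms(2) unfolding s_walk_def by auto
  ultimately show ?thesis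
    using affine_between_extremes[of "mp (tab 4 kp u)" "walk_value p" "mp (tab 1 kp u)"
        "a u v" "b u v"]
    by (simp add: walk_value_snoc cand_value_def)
qed

lemma entry_ok_of_relax_inv:
  assumes "\<forall>u<n. entry_ok mp mp kp u" and "relax_inv mp kp (Suc kp) v (relaxed_preds mp kp v n) m"
  shows "entry_ok m mp (Suc kp) v"
proof -
  let ?S = "relaxed_preds mp kp v n"
  have walks: "m (tab 0 (Suc kp) v) = 1 \<and> m (tab 4 (Suc kp) v) \<le> walk_value p
      \<and> walk_value p \<le> m (tab 1 (Suc kp) v)" if sw: "s_walk (Suc kp) v p" for p
  proof -
    obtain p' u where p: "p = p' @ [v]" "s_walk kp u p'" "(u, v) \<in> E" "u < n"
      using s_walk_Suc[OF sw] by blast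
    with assms(1) have "entry_ok mp mp kp u" by simp
    then have "mp (tab 0 kp u) = 1" using p(2) unfolding entry_ok_def by blast
    with p have "(u, 0) \<in> ?S" "(u, 1) \<in> ?S" by (auto simp: relaxed_preds_def)
    with assms(2) have "m (tab 0 (Suc kp) v) = 1"
      "m (tab 4 (Suc kp) v) \<le> min (cand_value mp kp u v 0) (cand_value mp kp u v 1)"
      "max (cand_value mp kp u v 0) (cand_value mp kp u v 1) \<le> m (tab 1 (Suc kp) v)"
      unfolding relax_inv_def by fastforce+
    with walk_value_snoc_between[OF \<open>entry_ok mp mp kp u\<close> p(2), of v] show ?thesis
      unfolding p(1) by (auto simp: min_def max_def split: if_splits)
  qed
  with assms(2) show ?thesis unfolding entry_ok_def relax_inv_def by auto
qed

section \<open>Computing one entry and one layer\<close>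

definition input_intact :: "mem \<Rightarrow> bool" where
  "input_intact m \<longleftrightarrow> (\<forall>j < work_base n. m j = enc j)"

definition layer_cells :: "nat \<Rightarrow> nat set" where
  "layer_cells k = {reg 1, reg 2, reg 7} \<union> {tab q k v | q v. q < 8 \<and> v < n}"

definition v_pre :: "mem \<Rightarrow> nat \<Rightarrow> nat \<Rightarrow> bool" where
  "v_pre mk k kp \<longleftrightarrow> mk 0 = real n \<and> mk (reg 0) = real k \<and> k = Suc kp \<and> k < n
     \<and> input_intact mk \<and> (\<forall>u<n. entry_ok mk mk kp u)"

definition v_inv :: "mem \<Rightarrow> nat \<Rightarrow> nat \<Rightarrow> mem \<Rightarrow> bool" where
  "v_inv mk k i m \<longleftrightarrow> (\<forall>j. j \<notin> layer_cells k \<longrightarrow> m j = mk j) \<and> m (reg 1) = real i \<and> i \<le> n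
     \<and> (\<forall>v<i. entry_ok m mk k v)"

lemma below_work_base_notin_layer_cells [simp]: "j < work_base n \<Longrightarrow> j \<notin> layer_cells k"
  by (auto simp: layer_cells_def reg_addr_def table_addr_def)

lemma reg_in_layer_cells [simp]: "i < 16 \<Longrightarrow> reg i \<in> layer_cells k \<longleftrightarrow> i = 1 \<or> i = 2 \<or> i = 7"
  by (auto simp: layer_cells_def)

lemma tab_in_layer_cells [simp]: "q < 8 \<Longrightarrow> u < n \<Longrightarrow> tab q j u \<in> layer_cells k \<longleftrightarrow> j = k"
  by (auto simp: layer_cells_def)

lemma edge_addr_notin_layer_cells [simp]: "u < n \<Longrightarrow> v < n \<Longrightarrow> r < 3 \<Longrightarrow> edge_addr n u v r \<notin> layer_cells k"
  using edge_addr_less_work_base by simp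

lemma relax_cells_subset_layer_cells: "v < n \<Longrightarrow> insert (reg 2) (relax_cells k v) \<subseteq> layer_cells k"
  by (auto simp: relax_cells_def layer_cells_def)

lemma u_pre_at_v_body:
  assumes "v_pre mk k kp" and "v_inv mk k i m" and "i < n"
  shows "u_pre (m(tab 0 k i := 0, reg 2 := 0)) mk kp k i"
proof -
  let ?m = "m(tab 0 k i := 0, reg 2 := 0)"
  have mk: "mk 0 = real n" "mk (reg 0) = real k" "k = Suc kp" "input_intact mk"
      "\<forall>u<n. entry_ok mk mk kp u"
    using assms(1) unfolding v_pre_def by auto
  have fr: "\<forall>j. j \<notin> layer_cells k \<longrightarrow> m j = mk j" and "m (reg 1) = real i"
    using assms(2) unfolding v_inv_def by auto
  have edge: "?m (edge_addr n u i r) = enc (edge_addr n u i r)" if "u < n" "r < 3" for u r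
    using fr mk(4) edge_addr_less_work_base[OF that(1) assms(3) that(2)] that assms(3)
    unfolding input_intact_def by simp
  have "?m (tab q kp u) = mk (tab q kp u)" if "u < n" "q < 8" for u q
    using fr that assms(3) mk(3) by simp
  moreover have "mk (tab 0 kp u) = 0 \<or> mk (tab 0 kp u) = 1" if "u < n" for u
    using mk(5) that unfolding entry_ok_def by blast
  ultimately show ?thesis
    unfolding u_pre_def using fr mk \<open>m (reg 1) = real i\<close> assms(3)
      edge enc_edge_addr[OF _ assms(3)] by simp
qed

lemma v_inv_after_u_loop:
  assumes "v_pre mk k kp" and "v_inv mk k i m" and "i < n"
    and "u_inv (m(tab 0 k i := 0, reg 2 := 0)) mk kp k i n m'"
  shows "v_inv mk k (Suc i) (m'(reg 1 := real i + 1))"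
proof -
  let ?m = "m(tab 0 k i := 0, reg 2 := 0)" and ?m' = "m'(reg 1 := real i + 1)"
  have "k = Suc kp" "\<forall>u<n. entry_ok mk mk kp u" using assms(1) unfolding v_pre_def by auto
  have fr: "\<forall>j. j \<notin> layer_cells k \<longrightarrow> m j = mk j" and old: "\<forall>v<i. entry_ok m mk k v"
    using assms(2) unfolding v_inv_def by auto
  have fr': "\<forall>j. j \<notin> insert (reg 2) (relax_cells k i) \<longrightarrow> m' j = ?m j"
    and "relax_inv mk kp k i (relaxed_preds mk kp i n) m'"
    using assms(4) unfolding u_inv_def by auto
  then have "entry_ok m' mk k i"
    using entry_ok_of_relax_inv \<open>k = Suc kp\<close> \<open>\<forall>u<n. entry_ok mk mk kp u\<close> by blast
  then have new: "entry_ok ?m' mk k i" by (subst entry_ok_cong) simp_all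
  have "?m' j = mk j" if "j \<notin> layer_cells k" for j
  proof -
    have "j \<notin> insert (reg 2) (relax_cells k i)" "j \<noteq> tab 0 k i" "j \<noteq> reg 1"
      using that relax_cells_subset_layer_cells[OF assms(3), of k] assms(3) by auto
    with that fr fr' show ?thesis by simp
  qed
  moreover have "entry_ok ?m' mk k v" if "v < Suc i" for v
  proof (cases "v = i")
    case False
    with that have "v < i" by simp
    have "entry_ok ?m' mk k v = entry_ok m mk k v"
      using fr' \<open>v < i\<close> assms(3) by (intro entry_ok_cong) simp_all
    with old \<open>v < i\<close> show ?thesis by simp
  qed (use new in simp)
  ultimately show ?thesis
    using assms(3) unfolding v_inv_def by simp
qed

lemma wp_v_body:
  assumes "v_pre mk k kp" and "v_inv mk k i m" and "i < n"
  shows "wp_within v_body (v_inv mk k (Suc i)) m (time_bound n v_body)"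
proof -
  let ?m = "m(tab 0 k i := 0, reg 2 := 0)"
  have "m 0 = real n" "m (reg 0) = real k" "m (reg 1) = real i"
    using assms(1,2) unfolding v_pre_def v_inv_def by auto
  have "u_inv ?m mk kp k i 0 ?m"
    using assms(3) unfolding u_inv_def relax_inv_def relaxed_preds_def by simp
  then have "wp_within u_loop (u_inv ?m mk kp k i n) ?m (time_bound n u_loop)"
    using hoare_u_loop[OF u_pre_at_v_body[OF assms]] unfolding hoare_within_def by blast
  then have u_loop_incr: "wp_within (Seq u_loop (incr_reg 1)) (v_inv mk k (Suc i)) ?m
      (time_bound n (Seq u_loop (incr_reg 1)))"
  proof (rule wp_within_seq[OF wp_within_post])
    fix m'
    assume "u_inv ?m mk kp k i n m'"
    moreover from this have "m' 0 = real n" "m' (reg 1) = real i"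
      using \<open>m 0 = real n\<close> \<open>m (reg 1) = real i\<close> unfolding u_inv_def by auto
    ultimately show "wp_within (incr_reg 1) (v_inv mk k (Suc i)) m' (time_bound n (incr_reg 1))"
      using v_inv_after_u_loop[OF assms] by (intro wp_within_incr_reg) simp_all
  qed
  have set_u: "wp_within (Seq (set_reg 2 (N 0)) (Seq u_loop (incr_reg 1))) (v_inv mk k (Suc i))
      (m(tab 0 k i := 0)) (time_bound n (Seq (set_reg 2 (N 0)) (Seq u_loop (incr_reg 1))))"
    by (rule wp_within_seq, rule wp_within_set_reg) (use u_loop_incr \<open>m 0 = real n\<close> in simp_all)
  show ?thesis
    unfolding v_body_def
    by (rule wp_within_seq, rule wp_within_assign)
      (use set_u \<open>m 0 = real n\<close> \<open>m (reg 0) = real k\<close> \<open>m (reg 1) = real i\<close>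
        in \<open>simp_all add: k_ex_def v_ex_def\<close>)
qed

lemma hoare_v_loop:
  assumes "v_pre mk k kp"
  shows "hoare_within (v_inv mk k 0) v_loop (v_inv mk k n) (time_bound n v_loop)"
  unfolding v_loop_def
proof (rule hoare_within_for)
  fix i m
  assume "v_inv mk k i m"
  with assms show "bval (Less v_ex size_ex) m = Some (i < n)"
    unfolding v_inv_def v_pre_def by (simp add: v_ex_def)
next
  fix i
  assume "i < n"
  then show "hoare_within (v_inv mk k i) v_body (v_inv mk k (Suc i)) (time_bound n v_body)"
    unfolding hoare_within_def using wp_v_body[OF assms] by blast
qed simp

section \<open>Filling the table\<close>

definition k_inv :: "nat \<Rightarrow> mem \<Rightarrow> bool" where
  "k_inv i m \<longleftrightarrow> input_intact m \<and> m (reg 0) = real (Suc i) \<and> Suc i \<le> n \<and> tables_ok m (Suc i)"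

lemma input_intact_header:
  "input_intact m \<Longrightarrow> m 0 = real n \<and> m 1 = real s \<and> m 2 = real t \<and> m 3 = L \<and> m 4 = x0"
  unfolding input_intact_def using enc_header by simp

lemma tables_ok_extend:
  assumes "tables_ok m k" and "0 < k" and "\<forall>v<n. entry_ok m' m k v"
    and "\<And>q j u. j \<noteq> k \<Longrightarrow> q < 8 \<Longrightarrow> u < n \<Longrightarrow> m' (tab q j u) = m (tab q j u)"
  shows "tables_ok m' (Suc k)"
  unfolding tables_ok_def
proof (intro allI impI)
  fix j v
  assume "j < Suc k" "v < n"
  show "entry_ok m' m' j v"
  proof (cases "j = k")
    case True
    have "entry_ok m' m' k v = entry_ok m' m k v"
      using assms(2,4) by (intro entry_ok_cong) simp_all
    with assms(3) \<open>v < n\<close> True show ?thesis by simp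
  next
    case False
    with \<open>j < Suc k\<close> have "entry_ok m' m' j v = entry_ok m m j v"
      using assms(4) \<open>v < n\<close> by (intro entry_ok_cong) simp_all
    with assms(1) False \<open>j < Suc k\<close> \<open>v < n\<close> show ?thesis unfolding tables_ok_def by simp
  qed
qed

lemma v_pre_at_k_body:
  assumes "k_inv i m" and "Suc i < n"
  shows "v_pre (m(reg 1 := 0)) (Suc i) i"
proof -
  from assms(1) have "input_intact m" "m (reg 0) = real (Suc i)" "tables_ok m (Suc i)"
    unfolding k_inv_def by auto
  moreover have "entry_ok (m(reg 1 := 0)) (m(reg 1 := 0)) i u = entry_ok m m i u" for u
    by (intro entry_ok_cong) simp_all
  ultimately show ?thesis
    using assms(2) input_intact_header unfolding v_pre_def tables_ok_def input_intact_def by simp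
qed

lemma k_inv_after_v_loop:
  assumes "k_inv i m" and "Suc i < n" and "v_inv (m(reg 1 := 0)) (Suc i) n m'"
  shows "k_inv (Suc i) (m'(reg 0 := real (Suc i) + 1))"
proof -
  let ?m' = "m'(reg 0 := real (Suc i) + 1)"
  have fr: "\<forall>j. j \<notin> layer_cells (Suc i) \<longrightarrow> m' j = (m(reg 1 := 0)) j"
    and new: "\<forall>v<n. entry_ok m' (m(reg 1 := 0)) (Suc i) v"
    using assms(3) unfolding v_inv_def by auto
  from assms(1) have "input_intact m" "tables_ok m (Suc i)" unfolding k_inv_def by auto
  have new': "entry_ok ?m' m (Suc i) v" if "v < n" for v
  proof -
    have "entry_ok ?m' m (Suc i) v = entry_ok m' (m(reg 1 := 0)) (Suc i) v"
      by (intro entry_ok_cong) simp_all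
    with new that show ?thesis by simp
  qed
  have "tables_ok ?m' (Suc (Suc i))"
    by (rule tables_ok_extend[OF \<open>tables_ok m (Suc i)\<close>]) (simp, use new' in blast, simp add: fr)
  moreover have "input_intact ?m'"
    using \<open>input_intact m\<close> fr unfolding input_intact_def by simp
  ultimately show ?thesis
    using assms(2) unfolding k_inv_def by simp
qed

lemma wp_k_body:
  assumes "k_inv i m" and "Suc i < n"
  shows "wp_within k_body (k_inv (Suc i)) m (time_bound n k_body)"
proof -
  let ?m = "m(reg 1 := 0)"
  have "m 0 = real n" "m (reg 0) = real (Suc i)"
    using assms(1) input_intact_header unfolding k_inv_def by auto
  have "v_inv ?m (Suc i) 0 ?m" unfolding v_inv_def by simp
  then have "wp_within v_loop (v_inv ?m (Suc i) n) ?m (time_bound n v_loop)"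
    using hoare_v_loop[OF v_pre_at_k_body[OF assms]] unfolding hoare_within_def by blast
  then have v_loop_incr: "wp_within (Seq v_loop (incr_reg 0)) (k_inv (Suc i)) ?m
      (time_bound n (Seq v_loop (incr_reg 0)))"
  proof (rule wp_within_seq[OF wp_within_post])
    fix m'
    assume "v_inv ?m (Suc i) n m'"
    moreover from this have "m' 0 = real n" "m' (reg 0) = real (Suc i)"
      using \<open>m 0 = real n\<close> \<open>m (reg 0) = real (Suc i)\<close> unfolding v_inv_def by auto
    ultimately show "wp_within (incr_reg 0) (k_inv (Suc i)) m' (time_bound n (incr_reg 0))"
      using k_inv_after_v_loop[OF assms] by (intro wp_within_incr_reg[where j = "Suc i"]) simp_all
  qed
  show ?thesis
    unfolding k_body_def
    by (rule wp_within_seq, rule wp_within_set_reg) (use v_loop_incr \<open>m 0 = real n\<close> in simp_all)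
qed

lemma hoare_k_loop:
  "hoare_within (k_inv 0) k_loop (k_inv (n - 1)) (time_bound n k_loop)"
  unfolding k_loop_def
proof (rule hoare_within_for)
  fix i m
  assume "k_inv i m"
  then have "m 0 = real n" "m (reg 0) = real (Suc i)" "Suc i \<le> n"
    using input_intact_header unfolding k_inv_def by auto
  then show "bval (Less k_ex size_ex) m = Some (i < n - 1)"
    by (simp add: k_ex_def less_diff_conv del: of_nat_Suc)
next
  fix i
  assume "i < n - 1"
  then show "hoare_within (k_inv i) k_body (k_inv (Suc i)) (time_bound n k_body)"
    unfolding hoare_within_def using wp_k_body by simp
qed simp

lemma wp_init_tables: "wp_within init_tables (k_inv 0) enc (time_bound n init_tables)"
proof -
  define m where "m = enc(tab 0 0 s := 1, tab 1 0 s := x0, tab 4 0 s := x0,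
    reg 0 := 1)"
  have "entry_ok m m 0 v" if "v < n" for v
  proof -
    have "enc (tab q 0 v) = 0" for q by (rule enc_beyond_work_base) (simp add: table_addr_def)
    then have "m (tab 0 0 v) = (if v = s then 1 else 0)"
      "v = s \<Longrightarrow> m (tab 1 0 v) = x0 \<and> m (tab 4 0 v) = x0"
      using that st_bound by (simp_all add: m_def)
    moreover have "v = s \<and> walk_value p = x0" if "s_walk 0 v p" for p
      using s_walk_0[OF that] by simp
    ultimately show ?thesis unfolding entry_ok_def by auto
  qed
  then have "k_inv 0 m"
    using two_le_n unfolding k_inv_def tables_ok_def input_intact_def by (simp add: m_def)
  then show ?thesis
    unfolding init_tables_def set_reg_def m_def using enc_header st_bound
    by - (rule wp_within_seq wp_within_assign | simp)+
qed

lemma wp_fill_tables: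
  "wp_within fill_tables (\<lambda>m. input_intact m \<and> tables_ok m n) enc (time_bound n fill_tables)"
proof -
  have "k_inv (n - 1) m \<Longrightarrow> input_intact m \<and> tables_ok m n" for m
    using two_le_n unfolding k_inv_def by simp
  then show ?thesis
    unfolding fill_tables_def using wp_init_tables hoare_k_loop
    by (intro wp_within_seq) (auto simp: hoare_within_def intro: wp_within_post)
qed

section \<open>Selecting the best extreme at t\<close>

definition best_inv :: "mem \<Rightarrow> (nat \<times> nat) set \<Rightarrow> mem \<Rightarrow> bool" where
  "best_inv ms C m \<longleftrightarrow> (m (reg 3) = 0 \<or> m (reg 3) = 1) \<and> (m (reg 3) = 1 \<longleftrightarrow> C \<noteq> {})
    \<and> (m (reg 3) = 1 \<longrightarrow> (\<exists>bk bw. (bk, bw) \<in> C \<and> m (reg 5) = real bk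
        \<and> m (reg 6) = real bw \<and> m (reg 4) = L * ms (tab (1 + 3 * bw) bk t)))
    \<and> (\<forall>(k, w)\<in>C. L * ms (tab (1 + 3 * w) k t) \<le> m (reg 4))"

definition select_cells :: "nat set" where
  "select_cells = reg ` {3..7}"

definition candidates :: "mem \<Rightarrow> nat \<Rightarrow> (nat \<times> nat) set" where
  "candidates ms i = {(k, w). k < i \<and> ms (tab 0 k t) = 1 \<and> w \<le> 1}"

definition s_inv :: "mem \<Rightarrow> nat \<Rightarrow> mem \<Rightarrow> bool" where
  "s_inv ms i m \<longleftrightarrow> (\<forall>j. j \<notin> insert (reg 0) select_cells \<longrightarrow> m j = ms j) \<and> m (reg 0) = real i
     \<and> i \<le> n \<and> best_inv ms (candidates ms i) m"

lemma select_cells_simps [simp]: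
  "j < work_base n \<Longrightarrow> j \<notin> select_cells" "tab q k v \<notin> select_cells"
  "i < 16 \<Longrightarrow> reg i \<in> select_cells \<longleftrightarrow> 3 \<le> i \<and> i \<le> 7"
  unfolding select_cells_def by (auto simp: reg_addr_def table_addr_def)

(* The hypotheses on m' describe the effect of select_step w, with candidate value c. *)
lemma best_inv_insert:
  assumes inv: "best_inv ms C m" and c: "c = L * ms (tab (1 + 3 * w) i t)"
    and flag: "m' (reg 3) = (if \<not> 0 < m (reg 3) \<or> m (reg 4) < c then 1 else m (reg 3))"
    and upd: "if \<not> 0 < m (reg 3) \<or> m (reg 4) < c
      then m' (reg 4) = c \<and> m' (reg 5) = real i \<and> m' (reg 6) = real w
      else m' (reg 4) = m (reg 4) \<and> m' (reg 5) = m (reg 5) \<and> m' (reg 6) = m (reg 6)"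
  shows "best_inv ms (insert (i, w) C) m'"
proof (cases "\<not> 0 < m (reg 3) \<or> m (reg 4) < c")
  case True
  then have new: "m' (reg 3) = 1" "m' (reg 4) = c" "m' (reg 5) = real i" "m' (reg 6) = real w"
    using flag upd by auto
  have "\<forall>(k, w')\<in>C. L * ms (tab (1 + 3 * w') k t) \<le> c"
  proof (cases "m (reg 3) = 1")
    case True
    with \<open>\<not> 0 < m (reg 3) \<or> m (reg 4) < c\<close> have "m (reg 4) < c" by simp
    with inv show ?thesis unfolding best_inv_def by fastforce
  next
    case False
    then have "C = {}" using inv unfolding best_inv_def by auto
    then show ?thesis by simp
  qed
  with new c show ?thesis unfolding best_inv_def by auto
next
  case False
  then have "m (reg 3) = 1" "c \<le> m (reg 4)" using inv unfolding best_inv_def by auto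
  moreover have "m' (reg 3) = 1" "m' (reg 4) = m (reg 4)" "m' (reg 5) = m (reg 5)" "m' (reg 6) = m (reg 6)"
    using flag upd False \<open>m (reg 3) = 1\<close> by auto
  ultimately show ?thesis using inv c unfolding best_inv_def by auto
qed

lemma wp_select_step:
  assumes "m 0 = real n" "m 2 = real t" "m 3 = L" "m (reg 0) = real i" "i < n" "w \<le> 1"
    and "m (tab (1 + 3 * w) i t) = ms (tab (1 + 3 * w) i t)" and inv: "best_inv ms C m"
  shows "wp_within (select_step w)
    (\<lambda>m'. best_inv ms (insert (i, w) C) m' \<and> (\<forall>j. j \<notin> select_cells \<longrightarrow> m' j = m j))
    m (time_bound n (select_step w))"
  using assms st_bound unfolding select_step_def set_reg_def k_ex_def
  by - (rule wp_within_seq wp_within_assign wp_within_if wp_within_skip conjI[OF best_inv_insert[OF inv]]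
      | simp)+

lemma candidates_Suc:
  "candidates ms (Suc i) =
    (if ms (tab 0 i t) = 1 then insert (i, 1) (insert (i, 0) (candidates ms i)) else candidates ms i)"
  by (auto simp: candidates_def less_Suc_eq)

lemma s_inv_facts:
  assumes "input_intact ms" and "s_inv ms i m"
  shows "m 0 = real n" "m 2 = real t" "m 3 = L" "m (reg 0) = real i"
    "\<And>q k v. m (tab q k v) = ms (tab q k v)"
  using assms input_intact_header[OF assms(1)] unfolding s_inv_def by auto

lemma wp_s_body_incr:
  assumes "input_intact ms" and "s_inv ms i m" and "i < n"
    and "\<forall>j. j \<notin> select_cells \<longrightarrow> m' j = m j" and "best_inv ms (candidates ms (Suc i)) m'"
  shows "wp_within (incr_reg 0) (s_inv ms (Suc i)) m' (time_bound n (incr_reg 0))"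
proof (rule wp_within_incr_reg)
  show "m' 0 = real n" "m' (reg 0) = real i" using s_inv_facts[OF assms(1,2)] assms(4) by auto
  have "best_inv ms C (m'(reg 0 := real i + 1)) = best_inv ms C m'" for C
    unfolding best_inv_def by simp
  with assms(5) have "best_inv ms (candidates ms (Suc i)) (m'(reg 0 := real i + 1))" by simp
  with assms(2-4) show "s_inv ms (Suc i) (m'(reg 0 := real i + 1))" unfolding s_inv_def by simp
qed

lemma wp_s_body:
  assumes "input_intact ms" "tables_ok ms n" and inv: "s_inv ms i m" and "i < n"
  shows "wp_within s_body (s_inv ms (Suc i)) m (time_bound n s_body)"
  unfolding s_body_def
proof (rule wp_within_seq, rule wp_within_if)
  note facts = s_inv_facts[OF assms(1) inv]
  have "ms (tab 0 i t) = 0 \<or> ms (tab 0 i t) = 1"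
    using assms(2,4) st_bound unfolding tables_ok_def entry_ok_def by blast
  then have guard: "bval s_guard m = Some (ms (tab 0 i t) = 1)"
    using facts by (auto simp: s_guard_def k_ex_def)
  then show "bval s_guard m \<noteq> None" by simp
  have best: "best_inv ms (candidates ms i) m" using inv unfolding s_inv_def by blast
  {
    fix bv
    assume "bval s_guard m = Some bv" "\<not> bv"
    with guard have "candidates ms (Suc i) = candidates ms i" by (simp add: candidates_Suc)
    with best show "wp_within SKIP (\<lambda>m'. wp_within (incr_reg 0) (s_inv ms (Suc i)) m'
        (time_bound n (incr_reg 0))) m (time_bound n SKIP)"
      using wp_s_body_incr[OF assms(1,3,4)] by (intro wp_within_skip) simp
  next
    fix bv
    assume "bval s_guard m = Some bv" "bv"
    with guard have reached: "ms (tab 0 i t) = 1" by simp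
    have step0: "wp_within (select_step 0) (\<lambda>m'. best_inv ms (insert (i, 0) (candidates ms i)) m'
        \<and> (\<forall>j. j \<notin> select_cells \<longrightarrow> m' j = m j)) m (time_bound n (select_step 0))"
      by (rule wp_select_step) (use facts assms(4) best in auto)
    show "wp_within (Seq (select_step 0) (select_step 1)) (\<lambda>m'. wp_within (incr_reg 0) (s_inv ms (Suc i)) m'
        (time_bound n (incr_reg 0))) m (time_bound n (Seq (select_step 0) (select_step 1)))"
    proof (rule wp_within_seq, rule wp_within_post[OF step0], elim conjE)
      fix m1
      assume best1: "best_inv ms (insert (i, 0) (candidates ms i)) m1"
        and fr1: "\<forall>j. j \<notin> select_cells \<longrightarrow> m1 j = m j"
      have "wp_within (select_step 1) (\<lambda>m'. best_inv ms (insert (i, 1) (insert (i, 0) (candidates ms i))) m'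
          \<and> (\<forall>j. j \<notin> select_cells \<longrightarrow> m' j = m1 j)) m1 (time_bound n (select_step 1))"
        by (rule wp_select_step) (use facts fr1 best1 assms(4) in auto)
      then show "wp_within (select_step 1) (\<lambda>m'. wp_within (incr_reg 0) (s_inv ms (Suc i)) m'
          (time_bound n (incr_reg 0))) m1 (time_bound n (select_step 1))"
        using wp_s_body_incr[OF assms(1,3,4)] fr1 reached
        by (auto simp: candidates_Suc elim!: wp_within_post)
    qed
  }
qed

lemma hoare_s_loop:
  assumes "input_intact ms" "tables_ok ms n"
  shows "hoare_within (s_inv ms 0) s_loop (s_inv ms n) (time_bound n s_loop)"
  unfolding s_loop_def
proof (rule hoare_within_for)
  fix i m
  assume "s_inv ms i m"
  then have "m 0 = real n" "m (reg 0) = real i"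
    using input_intact_header[OF assms(1)] unfolding s_inv_def by auto
  then show "bval (Less k_ex size_ex) m = Some (i < n)" by (simp add: k_ex_def)
next
  fix i
  assume "i < n"
  then show "hoare_within (s_inv ms i) s_body (s_inv ms (Suc i)) (time_bound n s_body)"
    unfolding hoare_within_def using wp_s_body[OF assms] by blast
qed simp

lemma wp_select_best:
  assumes "input_intact ms" "tables_ok ms n"
  shows "wp_within select_best (s_inv ms n) ms (time_bound n select_best)"
proof -
  have "ms 0 = real n" using input_intact_header[OF assms(1)] by simp
  moreover have "s_inv ms 0 (ms(reg 3 := 0, reg 0 := 0))"
    unfolding s_inv_def best_inv_def candidates_def by auto
  ultimately show ?thesis
    using hoare_s_loop[OF assms] unfolding select_best_def hoare_within_def
    by - (rule wp_within_seq wp_within_set_reg | simp)+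
qed

section \<open>Reading off the path\<close>

lemma entry_predecessor:
  assumes "tables_ok ms n" and "0 < k" "k < n" "v < n" "ms (tab 0 k v) = 1" "w \<le> 1"
  obtains u f where "u < n" "f \<le> 1" "(u, v) \<in> E" "ms (tab 0 (k - 1) u) = 1"
    "ms (tab (2 + 3 * w) k v) = real u" "ms (tab (3 + 3 * w) k v) = real f"
    "ms (tab (1 + 3 * w) k v) = a u v * ms (tab (1 + 3 * f) (k - 1) u) + b u v"
proof -
  from assms(1-4) have "entry_ok ms ms k v" unfolding tables_ok_def by blast
  with assms(2,5) have "back_pointer ms (k - 1) k v 1 2 3 ms" "back_pointer ms (k - 1) k v 4 5 6 ms"
    unfolding entry_ok_def by auto
  with assms(6) have "back_pointer ms (k - 1) k v (1 + 3 * w) (2 + 3 * w) (3 + 3 * w) ms"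
    by (cases w) auto
  with that show thesis unfolding back_pointer_def cand_value_def by blast
qed

(* After i iterations the last i vertices of the path are stored in the cells from bk - i + 2 on;
   preceded by the current vertex V of layer bk - i they form a walk to t, whose value starting
   from the extreme W of entry (bk - i, V) is the target value tgt. *)
definition r_inv :: "mem \<Rightarrow> nat \<Rightarrow> real \<Rightarrow> nat \<Rightarrow> mem \<Rightarrow> bool" where
  "r_inv ms bk tgt i m \<longleftrightarrow> m 0 = real n
     \<and> (\<forall>j. work_base n \<le> j \<longrightarrow> j \<notin> {reg 8, reg 9, reg 10, reg 11} \<longrightarrow> m j = ms j)
     \<and> i \<le> bk \<and> m (reg 8) = real (bk - i)
     \<and> (\<exists>V W sfx. V < n \<and> W \<le> 1 \<and> m (reg 9) = real V \<and> m (reg 10) = real W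
         \<and> ms (tab 0 (bk - i) V) = 1 \<and> length sfx = i \<and> (\<forall>j<i. m (bk - i + 2 + j) = real (sfx ! j))
         \<and> walk E (V # sfx) \<and> last (V # sfx) = t
         \<and> path_apply a b (V # sfx) (ms (tab (1 + 3 * W) (bk - i) V)) = tgt)"

lemma less_work_base: "j \<le> n + 1 \<Longrightarrow> j < work_base n"
  using le_square[of n] unfolding work_base_def by (simp only: mult.assoc)

lemma wp_r_body:
  assumes tab: "tables_ok ms n" and "bk < n" and ri: "r_inv ms bk tgt i m" and "i < bk"
  shows "wp_within r_body (r_inv ms bk tgt (Suc i)) m (time_bound n r_body)"
proof -
  define K where "K = bk - i"
  have K: "0 < K" "K < n" "bk - Suc i = K - 1" using assms(2,4) unfolding K_def by auto
  have m0: "m 0 = real n" and m8: "m (reg 8) = real K"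
    and fr: "\<forall>j. work_base n \<le> j \<longrightarrow> j \<notin> {reg 8, reg 9, reg 10, reg 11} \<longrightarrow> m j = ms j"
    using ri unfolding r_inv_def K_def by auto
  obtain V W sfx where VW: "V < n" "W \<le> 1" "m (reg 9) = real V" "m (reg 10) = real W"
      "ms (tab 0 K V) = 1"
    and sfx: "length sfx = i" "\<forall>j<i. m (K + 2 + j) = real (sfx ! j)" "walk E (V # sfx)" "last (V # sfx) = t"
      "path_apply a b (V # sfx) (ms (tab (1 + 3 * W) K V)) = tgt"
    using ri unfolding r_inv_def K_def by blast
  obtain u f where uf: "u < n" "f \<le> 1" "(u, V) \<in> E" "ms (tab 0 (K - 1) u) = 1"
      "ms (tab (2 + 3 * W) K V) = real u" "ms (tab (3 + 3 * W) K V) = real f"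
      "ms (tab (1 + 3 * W) K V) = a u V * ms (tab (1 + 3 * f) (K - 1) u) + b u V"
    using entry_predecessor[OF tab K(1,2) VW(1,5,2)] by blast
  have mA: "m (tab q K V) = ms (tab q K V)" for q
  proof -
    have "work_base n \<le> tab q K V" by (simp add: table_addr_def)
    with fr show ?thesis by simp
  qed
  define M where "M = m(K + 1 := real V, reg 11 := real u, reg 10 := real f,
    reg 9 := real u, reg 8 := real K - 1)"
  have run: "wp_within r_body (\<lambda>m'. m' = M) m (time_bound n r_body)"
    unfolding r_body_def set_reg_def
    using m0 m8 VW K less_work_base[of "K + 1"] uf mA[of "2 + 3 * W"] mA[of "3 + 3 * W"]
    by - (rule wp_within_seq, rule wp_within_assign[where k = "K + 1"], simp, simp,
          (rule wp_within_seq wp_within_assign | simp)+, simp add: M_def)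
  have cells: "M (K + 1 + j) = real ((V # sfx) ! j)" if "j < Suc i" for j
  proof (cases j)
    case (Suc j')
    with that assms(2,4) have "K + 2 + j' \<le> n + 1" unfolding K_def by arith
    then have "K + 2 + j' < work_base n" by (rule less_work_base)
    with Suc that sfx(2) show ?thesis by (simp add: M_def)
  qed (use less_work_base[of "K + 1"] K in \<open>simp add: M_def\<close>)
  have "r_inv ms bk tgt (Suc i) M"
    unfolding r_inv_def
  proof (intro conjI exI)
    show "M 0 = real n" "Suc i \<le> bk" "M (reg 8) = real (bk - Suc i)"
      using m0 assms(4) K by (simp_all add: M_def of_nat_diff)
    show "\<forall>j. work_base n \<le> j \<longrightarrow> j \<notin> {reg 8, reg 9, reg 10, reg 11} \<longrightarrow> M j = ms j"
      using fr less_work_base[of "K + 1"] K by (auto simp: M_def)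
    show "\<forall>j<Suc i. M (bk - Suc i + 2 + j) = real ((V # sfx) ! j)"
      using cells K by (simp add: add.commute add.left_commute)
  qed (use uf sfx K in \<open>simp_all add: M_def\<close>)
  then show ?thesis using wp_within_post[OF run] by blast
qed

lemma hoare_r_loop:
  assumes "tables_ok ms n" and "bk < n"
  shows "hoare_within (r_inv ms bk tgt 0) r_loop (r_inv ms bk tgt bk) (time_bound n r_loop)"
  unfolding r_loop_def
proof (rule hoare_within_for)
  fix i m
  assume "r_inv ms bk tgt i m"
  then show "bval (Less (N 0) (rd_reg 8)) m = Some (i < bk)"
    unfolding r_inv_def by auto
next
  fix i
  assume "i < bk"
  then show "hoare_within (r_inv ms bk tgt i) r_body (r_inv ms bk tgt (Suc i)) (time_bound n r_body)"
    unfolding hoare_within_def using wp_r_body[OF assms] by blast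
qed (use assms(2) in simp)

lemma wp_write_output:
  assumes "tables_ok ms n" and "ms (reg 5) = real bk" and "r_inv ms bk tgt bk m"
  shows "wp_within write_output (\<lambda>m'. \<exists>p. outputs_path m' p \<and> is_st_path E s t p \<and> walk_value p = tgt)
    m (time_bound n write_output)"
proof -
  have m0: "m 0 = real n"
    and fr: "\<forall>j. work_base n \<le> j \<longrightarrow> j \<notin> {reg 8, reg 9, reg 10, reg 11} \<longrightarrow> m j = ms j"
    using assms(3) unfolding r_inv_def by auto
  obtain V W sfx where VW: "V < n" "W \<le> 1" "m (reg 9) = real V" "ms (tab 0 0 V) = 1"
    and sfx: "length sfx = bk" "\<forall>j<bk. m (2 + j) = real (sfx ! j)" "walk E (V # sfx)" "last (V # sfx) = t"
      "path_apply a b (V # sfx) (ms (tab (1 + 3 * W) 0 V)) = tgt"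
    using assms(3) unfolding r_inv_def by auto
  have "entry_ok ms ms 0 V" using assms(1) VW two_le_n unfolding tables_ok_def by auto
  with VW have "V = s" "ms (tab (1 + 3 * W) 0 V) = x0"
    unfolding entry_ok_def by (auto simp: le_Suc_eq)
  with sfx have path: "is_st_path E s t (V # sfx)" "walk_value (V # sfx) = tgt"
    by (simp_all add: is_st_path_iff_walk)
  have "m (reg 5) = real bk" using fr assms(2) by (simp add: reg_addr_def)
  moreover have "outputs_path (m(1 := real V, 0 := real bk + 1)) (V # sfx)"
    unfolding outputs_path_def using sfx(1,2) by (auto simp: nth_Cons split: nat.split)
  ultimately show ?thesis
    unfolding write_output_def using m0 VW path
    by - (rule wp_within_seq, rule wp_within_assign[where k = 1], simp, simp,
          rule wp_within_assign[where k = 0], simp, simp, auto)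
qed

lemma wp_reconstruct:
  assumes "tables_ok ms n" and "bk < n" and "bw \<le> 1" and "ms 0 = real n" "ms 2 = real t"
    and "ms (reg 5) = real bk" "ms (reg 6) = real bw" "ms (tab 0 bk t) = 1"
  shows "wp_within reconstruct
    (\<lambda>m'. \<exists>p. outputs_path m' p \<and> is_st_path E s t p \<and> walk_value p = ms (tab (1 + 3 * bw) bk t))
    ms (time_bound n reconstruct)"
proof -
  let ?tgt = "ms (tab (1 + 3 * bw) bk t)"
  have "r_inv ms bk ?tgt 0 (ms(reg 8 := real bk, reg 9 := real t, reg 10 := real bw))"
    unfolding r_inv_def using assms st_bound by (intro conjI exI[of _ t] exI[of _ bw] exI[of _ "[]"]) auto
  then have "wp_within r_loop (r_inv ms bk ?tgt bk)
      (ms(reg 8 := real bk, reg 9 := real t, reg 10 := real bw)) (time_bound n r_loop)"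
    using hoare_r_loop[OF assms(1,2)] unfolding hoare_within_def by blast
  then have "wp_within trace_back
      (\<lambda>m'. \<exists>p. outputs_path m' p \<and> is_st_path E s t p \<and> walk_value p = ?tgt)
      (ms(reg 8 := real bk, reg 9 := real t, reg 10 := real bw))
      (time_bound n trace_back)"
    unfolding trace_back_def
    by (rule wp_within_seq[OF wp_within_post]) (rule wp_write_output[OF assms(1,6)])
  then show ?thesis
    unfolding reconstruct_def using assms(4-7)
    by - (rule wp_within_seq wp_within_set_reg | simp)+
qed

section \<open>Correctness and running time of the whole program\<close>

(* As L x is monotone in x, L x over the values of s-t walks with k edges is maximised at one of
   the two extremes of entry (k, t). *)
lemma best_candidate_optimal:
  assumes "tables_ok ms n" and "is_st_path E s t p"
    and "\<forall>(k, w)\<in>candidates ms n. L * ms (tab (1 + 3 * w) k t) \<le> best"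
  shows "L * walk_value p \<le> best"
proof -
  let ?k = "length p - 1"
  have "entry_ok ms ms ?k t"
    using assms(1) st_path_s_walk[OF assms(2)] st_bound unfolding tables_ok_def by blast
  then have "ms (tab 0 ?k t) = 1" "ms (tab 4 ?k t) \<le> walk_value p"
    "walk_value p \<le> ms (tab 1 ?k t)"
    using st_path_s_walk[OF assms(2)] unfolding entry_ok_def by auto
  moreover from this have "(?k, 0) \<in> candidates ms n" "(?k, 1) \<in> candidates ms n"
    using st_path_s_walk(2)[OF assms(2)] unfolding candidates_def by auto
  ultimately have "L * ms (tab 1 ?k t) \<le> best" "L * ms (tab 4 ?k t) \<le> best"
    "L * walk_value p \<le> max (L * ms (tab 1 ?k t)) (L * ms (tab 4 ?k t))"
    using assms(3) affine_between_extremes[of "ms (tab 4 ?k t)" "walk_value p"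
        "ms (tab 1 ?k t)" L 0]
    by force+
  then show ?thesis by linarith
qed

lemma wp_reconstruct_optimal:
  assumes "\<exists>p. is_st_path E s t p" and "input_intact ms" and "tables_ok ms n" and "s_inv ms n m"
  shows "wp_within reconstruct (\<lambda>m'. \<exists>p. outputs_path m' p \<and> optimal_path E a b L x0 s t p) m
    (time_bound n reconstruct)"
proof -
  have fr: "\<forall>j. j \<notin> insert (reg 0) select_cells \<longrightarrow> m j = ms j"
    and best: "best_inv ms (candidates ms n) m"
    using assms(4) unfolding s_inv_def by auto
  from assms(1,3) obtain p where "is_st_path E s t p" by blast
  then have "candidates ms n \<noteq> {}"
    using st_path_s_walk[of p] assms(3) st_bound unfolding tables_ok_def entry_ok_def candidates_def by blast
  with best have "m (reg 3) = 1" unfolding best_inv_def by blast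
  with best obtain bk bw where b: "(bk, bw) \<in> candidates ms n" "m (reg 5) = real bk"
      "m (reg 6) = real bw" "m (reg 4) = L * ms (tab (1 + 3 * bw) bk t)"
    unfolding best_inv_def by blast
  from best have le: "\<forall>(k, w)\<in>candidates ms n. L * ms (tab (1 + 3 * w) k t) \<le> m (reg 4)"
    unfolding best_inv_def by blast
  have bk: "bk < n" "bw \<le> 1" "ms (tab 0 bk t) = 1" using b(1) unfolding candidates_def by auto
  have mA: "m (tab q k v) = ms (tab q k v)" for q k v
    using fr by simp
  have "tables_ok m n"
    using assms(3) unfolding tables_ok_def by (auto simp: mA cong: entry_ok_cong)
  moreover have "m 0 = real n" "m 2 = real t"
    using fr input_intact_header[OF assms(2)] by auto
  ultimately have "wp_within reconstruct (\<lambda>m'. \<exists>p. outputs_path m' p \<and> is_st_path E s t p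
      \<and> walk_value p = m (tab (1 + 3 * bw) bk t)) m (time_bound n reconstruct)"
    using bk b(2,3) by (intro wp_reconstruct) (simp_all add: mA)
  then show ?thesis
  proof (rule wp_within_post, elim exE conjE)
    fix m' p
    assume "outputs_path m' p" "is_st_path E s t p" "walk_value p = m (tab (1 + 3 * bw) bk t)"
    moreover have "L * walk_value q \<le> L * walk_value p" if "is_st_path E s t q" for q
      using best_candidate_optimal[OF assms(3) that] le b(4) \<open>walk_value p = _\<close> by (simp add: mA)
    ultimately show "\<exists>p. outputs_path m' p \<and> optimal_path E a b L x0 s t p"
      unfolding optimal_path_def by blast
  qed
qed

lemma wp_gpp_program:
  assumes "\<exists>p. is_st_path E s t p"
  shows "wp_within gpp_program (\<lambda>m'. \<exists>p. outputs_path m' p \<and> optimal_path E a b L x0 s t p) enc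
    (time_bound n gpp_program)"
proof -
  have "wp_within (Seq select_best reconstruct) (\<lambda>m'. \<exists>p. outputs_path m' p \<and> optimal_path E a b L x0 s t p)
      ms (time_bound n (Seq select_best reconstruct))" if "input_intact ms" "tables_ok ms n" for ms
    using wp_reconstruct_optimal[OF assms that]
    by (intro wp_within_seq[OF wp_within_post[OF wp_select_best[OF that]]])
  then show ?thesis
    unfolding gpp_program_def by (intro wp_within_seq[OF wp_within_post[OF wp_fill_tables]]) auto
qed

end

lemma loop_depth_gpp_program: "loop_depth gpp_program = 3"
  by (simp add: gpp_program_def fill_tables_def init_tables_def k_loop_def k_body_def v_loop_def v_body_def
      u_loop_def u_body_def relax_def select_best_def s_loop_def s_body_def select_step_def reconstruct_def
      trace_back_def r_loop_def r_body_def write_output_def set_reg_def incr_reg_def)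

theorem theorem1:
  shows "\<exists>(prog :: com) (c :: nat).
     \<forall>n E a b L x0 s t.
       scalar_gpp_instance n E s t \<and> (\<exists>vs. is_st_path E s t vs) \<longrightarrow>
       (\<exists>time m' vs.
          big_step prog (encode_input n E a b L x0 s t) time m' \<and>
          time \<le> c * n ^ 3 \<and>
          outputs_path m' vs \<and> optimal_path E a b L x0 s t vs)"
proof -
  obtain C where C: "\<And>n. time_bound n gpp_program \<le> C * (n + 1) ^ 3"
    using poly_bounded_time_bound[of gpp_program] loop_depth_gpp_program
    unfolding poly_bounded_def by auto
  show ?thesis
  proof (rule exI[of _ gpp_program], rule exI[of _ "8 * C"], intro allI impI)
    fix n E a b L x0 s t
    assume "scalar_gpp_instance n E s t \<and> (\<exists>vs. is_st_path E s t vs)"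
    then interpret scalar_gpp n E a b L x0 s t
      using scalar_gpp.intro by blast
    from wp_gpp_program \<open>_ \<and> (\<exists>vs. is_st_path E s t vs)\<close> obtain time m' p
      where "big_step gpp_program enc time m'" "time \<le> time_bound n gpp_program"
        "outputs_path m' p" "optimal_path E a b L x0 s t p"
      unfolding wp_within_def by blast
    moreover have "(n + 1) ^ 3 \<le> (2 * n) ^ 3" using two_le_n by (intro power_mono) simp_all
    then have "C * (n + 1) ^ 3 \<le> 8 * C * n ^ 3" by (simp add: power_mult_distrib)
    ultimately show "\<exists>time m' vs. big_step gpp_program enc time m' \<and> time \<le> 8 * C * n ^ 3
        \<and> outputs_path m' vs \<and> optimal_path E a b L x0 s t vs"
      using C[of n] by (meson le_trans)
  qed
qed

end
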